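(* Let $X_1,X_2,\dots$ be i.i.d. $\mathbb{Z}$-valued random variables satisfying conditions (A1), (A2), (A3) below, with constants $\beta\in(0,2]$, $c_*>0$, $\varepsilon>0$ from (A3), and let the hunter and rabbit processes and the measure $\tilde{\mathbb{P}}^{(N)}$ be as in the context. If $\beta\in(0,1)$, there is $c_1>0$ such that for all $N\in\mathbb{N}\setminus\{1\}$, $c_1\le\tilde{\mathbb{P}}^{(N)}\big(\bigcup_{n=1}^N\{\mathcal{H}^{(N)}_n=\mathcal{R}^{(N)}_n\}\big)$. If $\beta=1$, there are $c_2>0$, $c_3>0$ such that for all $N\in\mathbb{N}\setminus\{1\}$, $$\frac{1}{\frac{1}{c_*\pi}\log N+c_2}\le\tilde{\mathbb{P}}^{(N)}\Big(\bigcup_{n=1}^N\{\mathcal{H}^{(N)}_n=\mathcal{R}^{(N)}_n\}\Big)\le\frac{c_3}{\log N}.$$ If $\beta\in(1,2]$, there is $c_4>0$ such that for all $N\in\mathbb{N}\setminus\{1\}$, $\frac{c_4}{N^{(\beta-1)/\beta}}\le\tilde{\mathbb{P}}^{(N)}\big(\bigcup_{n=1}^N\{\mathcal{H}^{(N)}_n=\mathcal{R}^{(N)}_n\}\big)$.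
   Context: $X_1,X_2,\dots$ live on $(\Omega,\mathcal{F},P)$ and $S_n=\sum_{j=1}^nX_j$. $Y_1,Y_2,\dots$ are i.i.d. $\mathbb{Z}$-valued random variables on $(\Omega_{\mathcal{H}},\mathcal{F}_{\mathcal{H}},P_{\mathcal{H}})$ with $P_{\mathcal{H}}\{|Y_1|\le1\}=1$. For $N\in\mathbb{N}$, $V_N=\{0,\dots,N-1\}$, $X^{(N)}_0$ is uniform on $V_N$ under $(\Omega_N,\mathcal{F}_N,\mu_N)$, and $(b\bmod N)$ is the remainder of $b\in\mathbb{Z}$ divided by $N$. Rabbit: $\mathcal{R}^{(N)}_0=X^{(N)}_0$, $\mathcal{R}^{(N)}_n=(X^{(N)}_0+S_n\bmod N)$. Hunter: $\mathcal{H}^{(N)}_0=0$, $\mathcal{H}^{(N)}_n=(\sum_{j=1}^nY_j\bmod N)$. $\mathbb{P}^{(N)}_{\mathcal{R}}=\mu_N\times P$ and $\tilde{\mathbb{P}}^{(N)}=P_{\mathcal{H}}\times\mathbb{P}^{(N)}_{\mathcal{R}}$ (product measures). $\phi(\theta)=\sum_{k\in\mathbb{Z}}e^{i\theta k}P\{X_1=k\}$. (A1) For each $y\in\mathbb{Z}$, the smallest subgroup of $\mathbb{Z}$ containing $\{y+k:P\{X_1=k\}>0\}$ is $\mathbb{Z}$. (A2) $P\{X_1=k\}=P\{X_1=-k\}$ for all $k\in\mathbb{Z}$. (A3) There exist $\beta\in(0,2]$, $c_*>0$, $\varepsilon>0$ with $\phi(\theta)=1-c_*|\theta|^\beta+O(|\theta|^{\beta+\varepsilon})$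 as $\theta\to0$. *)

theory Defs
  imports "HOL-Probability.Probability" "HOL-Library.Landau_Symbols"
begin

fun iid_list :: "'a pmf \<Rightarrow> nat \<Rightarrow> 'a list pmf" where
  "iid_list d 0 = return_pmf []"
| "iid_list d (Suc n) = bind_pmf d (\<lambda>x. bind_pmf (iid_list d n) (\<lambda>xs. return_pmf (x # xs)))"

definition int_subgroup :: "int set \<Rightarrow> bool" where
  "int_subgroup H \<longleftrightarrow> 0 \<in> H \<and> (\<forall>a\<in>H. \<forall>b\<in>H. a - b \<in> H)"

definition int_subgroup_gen :: "int set \<Rightarrow> int set" where
  "int_subgroup_gen S = \<Inter>{H. int_subgroup H \<and> S \<subseteq> H}"

definition char_fun :: "int pmf \<Rightarrow> real \<Rightarrow> complex" where
  "char_fun p \<theta> = measure_pmf.expectation p (\<lambda>k. cis (\<theta> * of_int k))"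

definition hr_joint :: "int pmf \<Rightarrow> int pmf \<Rightarrow> nat \<Rightarrow> (int \<times> int list \<times> int list) pmf" where
  "hr_joint p q N =
     bind_pmf (pmf_of_set {0..<int N}) (\<lambda>x0.
     bind_pmf (iid_list p N) (\<lambda>xs.
     bind_pmf (iid_list q N) (\<lambda>ys. return_pmf (x0, xs, ys))))"

definition rabbit :: "nat \<Rightarrow> int \<Rightarrow> int list \<Rightarrow> nat \<Rightarrow> int" where
  "rabbit N x0 xs n = (x0 + sum_list (take n xs)) mod int N"

definition hunter :: "nat \<Rightarrow> int list \<Rightarrow> nat \<Rightarrow> int" where
  "hunter N ys n = sum_list (take n ys) mod int N"

definition capture_prob :: "int pmf \<Rightarrow> int pmf \<Rightarrow> nat \<Rightarrow> real" where
  "capture_prob p q N = measure_pmf.prob (hr_joint p q N)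
     {(x0, xs, ys). \<exists>n\<in>{1..N}. hunter N ys n = rabbit N x0 xs n}"

end

theory Submission
  imports Defs
begin

text \<open>Seen from the hunter, the rabbit performs a random walk on the residues mod \<open>N\<close> with steps
  \<open>X\<^sub>j - Y\<^sub>j\<close>, started uniformly; capture means that this walk visits \<open>0\<close> by time \<open>N\<close>.
  Decomposing the visits to \<open>0\<close> according to the first one gives the renewal identity
  \<open>T/N = \<Sum>\<^sub>n P(first visit at n) G(T - n)\<close> for the Green function
  \<open>G(m) = \<Sum>\<^sub>k\<^sub>\<le>\<^sub>m P(S\<^sub>k \<equiv> 0 mod N)\<close>. Hence the capture probability is at least
  \<open>1 / G(N - 1)\<close> and, using stationarity of the uniform start, at most \<open>3 / G(N/2)\<close>.
  By Fourier inversion on the residues, \<open>G(m) = (1/N) \<Sum>\<^sub>j Re \<Sum>\<^sub>k\<^sub>\<le>\<^sub>m \<phi>(2\<pi>j/N)^k\<close>, and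
  (A1), (A3) give \<open>|\<phi>(\<theta>)| \<le> 1 - c|\<theta>|^\<beta>/2\<close> near \<open>0\<close> and \<open>|\<phi>(\<theta>)| \<le> 1 - \<eta>\<close> away from \<open>0\<close>.
  Summing the resulting geometric series bounds \<open>G(N - 1)\<close> by a constant, by
  \<open>log N / (c\<^sub>* \<pi>) + O(1)\<close>, or by \<open>O(N^((\<beta> - 1)/\<beta>))\<close> according as \<open>\<beta> < 1\<close>, \<open>\<beta> = 1\<close>, \<open>\<beta> > 1\<close>;
  for \<open>\<beta> = 1\<close> the matching bound \<open>G(N/2) \<ge> a log N - b\<close> comes from \<open>Re (1 - \<phi>(\<theta>))\<^sup>-\<^sup>1 \<ge> \<kappa>/|\<theta>|\<close>.\<close>

lemma length_iid_list: "xs \<in> set_pmf (iid_list d n) \<Longrightarrow> length xs = n"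
  by (induction n arbitrary: xs) auto

lemma iid_list_add:
  "iid_list d (a + b) = map_pmf (\<lambda>(u, v). u @ v) (pair_pmf (iid_list d a) (iid_list d b))"
proof (induction a)
  case 0
  then show ?case by (simp add: pair_return_pmf1 pmf.map_comp o_def)
next
  case (Suc a)
  then show ?case by (simp add: pair_pmf_def map_pmf_def bind_assoc_pmf bind_return_pmf)
qed

lemma iid_list_Suc_pair: "iid_list d (Suc n) = map_pmf (\<lambda>(x, xs). x # xs) (pair_pmf d (iid_list d n))"
  by (simp add: pair_pmf_def map_pmf_def bind_assoc_pmf bind_return_pmf)

lemma map_pmf_map2_iid_list:
  "map_pmf (\<lambda>(xs, ys). map2 f xs ys) (pair_pmf (iid_list p n) (iid_list q n))
   = iid_list (map_pmf (\<lambda>(x, y). f x y) (pair_pmf p q)) n"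
proof (induction n)
  case 0
  then show ?case by simp
next
  case (Suc n)
  have IH: "iid_list (map_pmf (\<lambda>(x, y). f x y) (pair_pmf p q)) n
      = bind_pmf (iid_list p n) (\<lambda>xs. bind_pmf (iid_list q n) (\<lambda>ys. return_pmf (map2 f xs ys)))"
    unfolding Suc[symmetric] by (simp add: pair_pmf_def map_pmf_def bind_assoc_pmf bind_return_pmf)
  show ?case
    unfolding iid_list.simps IH
    apply (simp add: pair_pmf_def map_pmf_def bind_assoc_pmf bind_return_pmf)
    apply (rule bind_pmf_cong[OF refl])
    apply (subst bind_commute_pmf)
    apply simp
    done
qed

lemma measure_pmf_prob_cong:
  assumes "\<And>x. x \<in> set_pmf M \<Longrightarrow> x \<in> A \<longleftrightarrow> x \<in> B"
  shows "measure_pmf.prob M A = measure_pmf.prob M B"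
proof -
  have "A \<inter> set_pmf M = B \<inter> set_pmf M" using assms by blast
  then show ?thesis by (metis measure_Int_set_pmf)
qed

lemma prob_pair_pmf_const:
  assumes "\<And>y. measure_pmf.prob U {x. P x y} = c"
  shows "measure_pmf.prob (pair_pmf U V) {(x, y). P x y} = c"
proof -
  have c0: "0 \<le> c" using assms[of undefined] by (metis measure_nonneg)
  have "pair_pmf U V = map_pmf (\<lambda>(y, x). (x, y)) (pair_pmf V U)"
    by (rule pair_commute_pmf)
  also have "pair_pmf V U = bind_pmf V (\<lambda>y. map_pmf (\<lambda>x. (y, x)) U)"
    by (simp add: pair_pmf_def map_pmf_def)
  finally have eq: "pair_pmf U V = map_pmf (\<lambda>(y, x). (x, y)) (bind_pmf V (\<lambda>y. map_pmf (\<lambda>x. (y, x)) U))" .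
  have "emeasure (measure_pmf (pair_pmf U V)) {(x, y). P x y}
      = (\<integral>\<^sup>+y. emeasure (measure_pmf U) {x. P x y} \<partial>measure_pmf V)"
    unfolding eq emeasure_map_pmf emeasure_bind_pmf
    by (intro nn_integral_cong) (auto simp: vimage_def)
  also have "\<dots> = ennreal c"
    by (simp add: measure_pmf.emeasure_eq_measure assms)
  finally show ?thesis using c0 by (simp add: measure_pmf.emeasure_eq_measure)
qed

lemma prob_iid_list_split:
  fixes d :: "'a::countable pmf"
  shows "measure_pmf.prob (iid_list d (a + b)) {ws. A (take a ws) \<and> B (drop a ws)}
       = measure_pmf.prob (iid_list d a) {u. A u} * measure_pmf.prob (iid_list d b) {v. B v}"
proof -
  have "measure_pmf.prob (iid_list d (a + b)) {ws. A (take a ws) \<and> B (drop a ws)}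
      = measure_pmf.prob (pair_pmf (iid_list d a) (iid_list d b)) ({u. A u} \<times> {v. B v})"
    unfolding iid_list_add measure_map_pmf
    by (rule measure_pmf_prob_cong) (auto dest!: length_iid_list)
  also have "\<dots> = measure_pmf.prob (iid_list d a) {u. A u} * measure_pmf.prob (iid_list d b) {v. B v}"
    by (rule measure_pmf_prob_product) (auto intro: countableI_type)
  finally show ?thesis .
qed

lemma prob_iid_list_take:
  fixes d :: "'a::countable pmf"
  assumes "a \<le> L"
  shows "measure_pmf.prob (iid_list d L) {ws. A (take a ws)} = measure_pmf.prob (iid_list d a) {u. A u}"
  using prob_iid_list_split[of d a "L - a" A "\<lambda>_. True"] assms by simp

section \<open>The walk started uniformly on the residues mod N\<close>

definition walk_pmf :: "int pmf \<Rightarrow> nat \<Rightarrow> nat \<Rightarrow> (int \<times> int list) pmf" where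
  "walk_pmf d N L = pair_pmf (pmf_of_set {0..<int N}) (iid_list d L)"

definition walk_pos :: "nat \<Rightarrow> int \<Rightarrow> int list \<Rightarrow> nat \<Rightarrow> int" where
  "walk_pos N x0 ws n = (x0 + sum_list (take n ws)) mod int N"

definition hits_zero :: "nat \<Rightarrow> nat \<Rightarrow> (int \<times> int list) set" where
  "hits_zero N T = {(x0, ws). \<exists>n\<in>{1..T}. walk_pos N x0 ws n = 0}"

definition first_zero :: "nat \<Rightarrow> nat \<Rightarrow> (int \<times> int list) set" where
  "first_zero N n = {(x0, ws). walk_pos N x0 ws n = 0 \<and> (\<forall>i\<in>{1..<n}. walk_pos N x0 ws i \<noteq> 0)}"

definition hit_prob :: "int pmf \<Rightarrow> nat \<Rightarrow> nat \<Rightarrow> nat \<Rightarrow> real" where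
  "hit_prob d N L T = measure_pmf.prob (walk_pmf d N L) (hits_zero N T)"

definition return_prob :: "int pmf \<Rightarrow> nat \<Rightarrow> nat \<Rightarrow> real" where
  "return_prob d N k = measure_pmf.prob (iid_list d k) {ws. sum_list ws mod int N = 0}"

definition green :: "int pmf \<Rightarrow> nat \<Rightarrow> nat \<Rightarrow> real" where
  "green d N m = (\<Sum>k\<le>m. return_prob d N k)"

lemma green_mono: "m \<le> m' \<Longrightarrow> green d N m \<le> green d N m'"
  unfolding green_def return_prob_def by (rule sum_mono2) auto

lemma green_ge_1: "1 \<le> green d N m"
  using green_mono[of 0 m d N] by (simp add: green_def return_prob_def)

lemma walk_pmf_add:
  "walk_pmf d N (a + b)
   = map_pmf (\<lambda>((x0, u), v). (x0, u @ v)) (pair_pmf (walk_pmf d N a) (iid_list d b))"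
  unfolding walk_pmf_def iid_list_add
  by (auto simp add: pair_map_pmf2 pair_pair_pmf pmf.map_comp o_def case_prod_beta apsnd_def
      intro!: map_pmf_cong)

lemma length_walk_pmf: "(x0, ws) \<in> set_pmf (walk_pmf d N L) \<Longrightarrow> length ws = L"
  unfolding walk_pmf_def by (auto dest: length_iid_list)

lemma prob_walk_pmf_split:
  "measure_pmf.prob (walk_pmf d N (a + b)) {(x0, ws). A x0 (take a ws) \<and> B (drop a ws)}
   = measure_pmf.prob (walk_pmf d N a) {(x0, u). A x0 u} * measure_pmf.prob (iid_list d b) {v. B v}"
proof -
  have "measure_pmf.prob (walk_pmf d N (a + b)) {(x0, ws). A x0 (take a ws) \<and> B (drop a ws)}
      = measure_pmf.prob (pair_pmf (walk_pmf d N a) (iid_list d b)) ({(x0, u). A x0 u} \<times> {v. B v})"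
    unfolding walk_pmf_add measure_map_pmf
    by (rule measure_pmf_prob_cong) (auto dest!: length_walk_pmf)
  also have "\<dots> = measure_pmf.prob (walk_pmf d N a) {(x0, u). A x0 u} * measure_pmf.prob (iid_list d b) {v. B v}"
    by (rule measure_pmf_prob_product) auto
  finally show ?thesis .
qed

lemma prob_walk_pmf_take:
  assumes "a \<le> L"
  shows "measure_pmf.prob (walk_pmf d N L) {(x0, ws). A x0 (take a ws)}
       = measure_pmf.prob (walk_pmf d N a) {(x0, u). A x0 u}"
  using prob_walk_pmf_split[of d N a "L - a" A "\<lambda>_. True"] assms by simp

lemma prob_uniform_residue_zero:
  assumes "N \<ge> 1"
  shows "measure_pmf.prob (pmf_of_set {0..<int N}) {x0. (x0 + s) mod int N = 0} = 1 / real N"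
proof -
  have unique: "x = (- s) mod int N" if "x \<in> {0..<int N}" "(x + s) mod int N = 0" for x
    using that by (metis add.commute add_diff_cancel_left' atLeastLessThan_iff diff_0
        mod_diff_left_eq mod_pos_pos_trivial)
  have "((- s) mod int N + s) mod int N = 0" by (simp add: mod_add_left_eq)
  then have "{0..<int N} \<inter> {x0. (x0 + s) mod int N = 0} = {(- s) mod int N}"
    using assms unique by auto
  then show ?thesis using assms by (subst measure_pmf_of_set) auto
qed

lemma prob_walk_pos_zero:
  assumes "N \<ge> 1"
  shows "measure_pmf.prob (walk_pmf d N L) {(x0, ws). walk_pos N x0 ws n = 0} = 1 / real N"
  unfolding walk_pmf_def walk_pos_def
  by (rule prob_pair_pmf_const) (rule prob_uniform_residue_zero[OF assms])

lemma walk_pos_take: "i \<le> n \<Longrightarrow> walk_pos N x0 (take n ws) i = walk_pos N x0 ws i"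
  by (simp add: walk_pos_def min_absorb1)

lemma first_zero_take: "(x0, take n ws) \<in> first_zero N n \<longleftrightarrow> (x0, ws) \<in> first_zero N n"
  unfolding first_zero_def by (auto simp: walk_pos_take)

lemma walk_pos_shift:
  assumes "n' \<le> n"
  shows "walk_pos N x0 ws n = (walk_pos N x0 ws n' + sum_list (take (n - n') (drop n' ws))) mod int N"
proof -
  have "take n ws = take n' ws @ take (n - n') (drop n' ws)"
    using take_add[of n' "n - n'" ws] assms by simp
  then show ?thesis unfolding walk_pos_def by (simp add: mod_add_left_eq add.assoc)
qed

lemma prob_first_zero_then_zero:
  assumes "1 \<le> n'" "n' \<le> n" "n \<le> T"
  shows "measure_pmf.prob (walk_pmf d N T) (first_zero N n' \<inter> {(x0, ws). walk_pos N x0 ws n = 0})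
       = measure_pmf.prob (walk_pmf d N T) (first_zero N n') * return_prob d N (n - n')"
proof -
  have T: "T = n' + (T - n')" using assms by simp
  have "(x0, ws) \<in> first_zero N n' \<Longrightarrow>
      walk_pos N x0 ws n = 0 \<longleftrightarrow> sum_list (take (n - n') (drop n' ws)) mod int N = 0" for x0 ws
    using walk_pos_shift[OF assms(2), of N x0 ws] by (simp add: first_zero_def mod_add_left_eq)
  then have set_eq: "first_zero N n' \<inter> {(x0, ws). walk_pos N x0 ws n = 0}
      = {(x0, ws). (x0, take n' ws) \<in> first_zero N n' \<and> sum_list (take (n - n') (drop n' ws)) mod int N = 0}"
    by (auto simp: first_zero_take)
  have "measure_pmf.prob (walk_pmf d N T) (first_zero N n' \<inter> {(x0, ws). walk_pos N x0 ws n = 0})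
     = measure_pmf.prob (walk_pmf d N n') {(x0, u). (x0, u) \<in> first_zero N n'} *
       measure_pmf.prob (iid_list d (T - n')) {v. sum_list (take (n - n') v) mod int N = 0}"
    using prob_walk_pmf_split[of d N n' "T - n'" "\<lambda>x0 u. (x0, u) \<in> first_zero N n'"
        "\<lambda>v. sum_list (take (n - n') v) mod int N = 0"]
    by (subst T) (simp only: set_eq)
  also have "measure_pmf.prob (iid_list d (T - n')) {v. sum_list (take (n - n') v) mod int N = 0}
      = return_prob d N (n - n')"
    unfolding return_prob_def using assms by (subst prob_iid_list_take) auto
  also have "measure_pmf.prob (walk_pmf d N n') {(x0, u). (x0, u) \<in> first_zero N n'}
      = measure_pmf.prob (walk_pmf d N T) (first_zero N n')"
    using prob_walk_pmf_take[of n' T d N "\<lambda>x0 u. (x0, u) \<in> first_zero N n'"] assms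
    by (simp add: first_zero_take)
  finally show ?thesis .
qed

lemma disjoint_family_first_zero:
  assumes "S \<subseteq> {1..}"
  shows "disjoint_family_on (first_zero N) S"
  unfolding disjoint_family_on_def
proof (intro ballI impI)
  fix m n assume mn: "m \<in> S" "n \<in> S" "m \<noteq> n"
  show "first_zero N m \<inter> first_zero N n = {}"
  proof (rule ccontr)
    assume "first_zero N m \<inter> first_zero N n \<noteq> {}"
    then obtain x0 ws where "(x0, ws) \<in> first_zero N m" "(x0, ws) \<in> first_zero N n" by auto
    moreover have "1 \<le> m" "1 \<le> n" using mn assms by auto
    ultimately show False using mn(3) unfolding first_zero_def
      by (cases "m < n") (auto dest: linorder_neqE_nat)
  qed
qed

lemma exists_first_zero:
  assumes "walk_pos N x0 ws n = 0" "1 \<le> n"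
  shows "\<exists>n'\<in>{1..n}. (x0, ws) \<in> first_zero N n'"
proof -
  define m where "m = (LEAST i. 1 \<le> i \<and> walk_pos N x0 ws i = 0)"
  have m: "1 \<le> m \<and> walk_pos N x0 ws m = 0"
    unfolding m_def by (rule LeastI[of _ n]) (use assms in auto)
  have "m \<le> n" unfolding m_def by (rule Least_le) (use assms in auto)
  moreover have "walk_pos N x0 ws i \<noteq> 0" if "i \<in> {1..<m}" for i
    using not_less_Least[of i "\<lambda>i. 1 \<le> i \<and> walk_pos N x0 ws i = 0"] that unfolding m_def by auto
  ultimately show ?thesis using m unfolding first_zero_def by auto
qed

lemma prob_walk_pos_zero_first_zero_sum:
  assumes "1 \<le> n"
  shows "measure_pmf.prob M {(x0, ws). walk_pos N x0 ws n = 0}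
     = (\<Sum>n'\<in>{1..n}. measure_pmf.prob M (first_zero N n' \<inter> {(x0, ws). walk_pos N x0 ws n = 0}))"
proof -
  have "{(x0, ws). walk_pos N x0 ws n = 0}
      = (\<Union>n'\<in>{1..n}. first_zero N n' \<inter> {(x0, ws). walk_pos N x0 ws n = 0})"
    using exists_first_zero[OF _ assms] by auto
  moreover have "disjoint_family_on (\<lambda>n'. first_zero N n' \<inter> {(x0, ws). walk_pos N x0 ws n = 0}) {1..n}"
    using disjoint_family_first_zero[of "{1..n}" N] unfolding disjoint_family_on_def by (auto simp: subset_eq)
  then have "measure_pmf.prob M (\<Union>n'\<in>{1..n}. first_zero N n' \<inter> {(x0, ws). walk_pos N x0 ws n = 0})
     = (\<Sum>n'\<in>{1..n}. measure_pmf.prob M (first_zero N n' \<inter> {(x0, ws). walk_pos N x0 ws n = 0}))"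
    by (intro measure_pmf.finite_measure_finite_Union) auto
  ultimately show ?thesis by simp
qed

lemma hit_prob_first_zero_sum:
  "hit_prob d N L T = (\<Sum>n'\<in>{1..T}. measure_pmf.prob (walk_pmf d N L) (first_zero N n'))"
proof -
  have "hits_zero N T = (\<Union>n'\<in>{1..T}. first_zero N n')"
  proof
    show "hits_zero N T \<subseteq> (\<Union>n'\<in>{1..T}. first_zero N n')"
    proof
      fix x assume "x \<in> hits_zero N T"
      then obtain x0 ws n where x: "x = (x0, ws)" "n \<in> {1..T}" "walk_pos N x0 ws n = 0"
        unfolding hits_zero_def by auto
      then obtain n' where "n' \<in> {1..n}" "(x0, ws) \<in> first_zero N n'"
        using exists_first_zero[of N x0 ws n] by auto
      then show "x \<in> (\<Union>n'\<in>{1..T}. first_zero N n')" using x by auto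
    qed
    show "(\<Union>n'\<in>{1..T}. first_zero N n') \<subseteq> hits_zero N T"
      unfolding hits_zero_def first_zero_def by auto
  qed
  then show ?thesis unfolding hit_prob_def
    by (simp add: measure_pmf.finite_measure_finite_Union disjoint_family_first_zero)
qed

lemma sum_triangle_swap:
  fixes g :: "nat \<Rightarrow> nat \<Rightarrow> real"
  shows "(\<Sum>n\<in>{1..T}. \<Sum>n'\<in>{1..n}. g n' (n - n')) = (\<Sum>n'\<in>{1..T}. \<Sum>k\<le>T - n'. g n' k)"
proof (induction T)
  case 0
  then show ?case by simp
next
  case (Suc T)
  have "(\<Sum>n'\<in>{1..T}. \<Sum>k\<le>Suc T - n'. g n' k)
      = (\<Sum>n'\<in>{1..T}. (\<Sum>k\<le>T - n'. g n' k) + g n' (Suc T - n'))"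
    by (intro sum.cong refl) (simp add: Suc_diff_le)
  then show ?case using Suc by (simp add: sum.distrib)
qed

text \<open>Each time \<open>n \<le> T\<close> contributes \<open>P(walk at 0 at time n) = 1/N\<close>; split this event
  according to the first visit to \<open>0\<close>.\<close>

lemma renewal_identity:
  assumes "N \<ge> 1"
  shows "real T / real N
       = (\<Sum>n'\<in>{1..T}. measure_pmf.prob (walk_pmf d N T) (first_zero N n') * green d N (T - n'))"
proof -
  have "real T / real N = (\<Sum>n\<in>{1..T}. measure_pmf.prob (walk_pmf d N T) {(x0, ws). walk_pos N x0 ws n = 0})"
    using prob_walk_pos_zero[OF assms] by simp
  also have "\<dots> = (\<Sum>n\<in>{1..T}. \<Sum>n'\<in>{1..n}.
      measure_pmf.prob (walk_pmf d N T) (first_zero N n') * return_prob d N (n - n'))"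
    by (intro sum.cong refl)
       (auto simp: prob_walk_pos_zero_first_zero_sum prob_first_zero_then_zero intro!: sum.cong)
  also have "\<dots> = (\<Sum>n'\<in>{1..T}. \<Sum>k\<le>T - n'. measure_pmf.prob (walk_pmf d N T) (first_zero N n') * return_prob d N k)"
    by (rule sum_triangle_swap)
  also have "\<dots> = (\<Sum>n'\<in>{1..T}. measure_pmf.prob (walk_pmf d N T) (first_zero N n') * green d N (T - n'))"
    by (simp add: green_def sum_distrib_left)
  finally show ?thesis .
qed

lemma hit_prob_take:
  assumes "T \<le> L"
  shows "hit_prob d N L T = hit_prob d N T T"
proof -
  have "(x0, take T ws) \<in> hits_zero N T \<longleftrightarrow> (x0, ws) \<in> hits_zero N T" for x0 ws
    unfolding hits_zero_def by (auto simp: walk_pos_take)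
  then show ?thesis
    unfolding hit_prob_def using prob_walk_pmf_take[of T L d N "\<lambda>x0 u. (x0, u) \<in> hits_zero N T"] assms
    by simp
qed

lemma hit_prob_mono: "T \<le> T' \<Longrightarrow> hit_prob d N L T \<le> hit_prob d N L T'"
  unfolding hit_prob_def by (rule measure_pmf.finite_measure_mono) (auto simp: hits_zero_def)

lemma hit_prob_green_ge_1:
  assumes "N \<ge> 1"
  shows "1 \<le> hit_prob d N N N * green d N (N - 1)"
proof -
  have "1 = (\<Sum>n'\<in>{1..N}. measure_pmf.prob (walk_pmf d N N) (first_zero N n') * green d N (N - n'))"
    using renewal_identity[OF assms, of N d] assms by simp
  also have "\<dots> \<le> (\<Sum>n'\<in>{1..N}. measure_pmf.prob (walk_pmf d N N) (first_zero N n') * green d N (N - 1))"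
    by (intro sum_mono mult_left_mono green_mono) auto
  also have "\<dots> = hit_prob d N N N * green d N (N - 1)"
    by (simp add: hit_prob_first_zero_sum sum_distrib_right)
  finally show ?thesis .
qed

lemma green_hit_prob_le:
  assumes "N \<ge> 1"
  shows "green d N h * hit_prob d N h h \<le> real (2 * h) / real N"
proof -
  have "green d N h * hit_prob d N h h = green d N h * hit_prob d N (2 * h) h"
    using hit_prob_take[of h "2 * h" d N] by simp
  also have "\<dots> = (\<Sum>n'\<in>{1..h}. measure_pmf.prob (walk_pmf d N (2 * h)) (first_zero N n') * green d N h)"
    by (simp add: hit_prob_first_zero_sum sum_distrib_left mult.commute)
  also have "\<dots> \<le> (\<Sum>n'\<in>{1..h}. measure_pmf.prob (walk_pmf d N (2 * h)) (first_zero N n') * green d N (2 * h - n'))"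
    by (intro sum_mono mult_left_mono green_mono) auto
  also have "\<dots> \<le> (\<Sum>n'\<in>{1..2 * h}. measure_pmf.prob (walk_pmf d N (2 * h)) (first_zero N n') * green d N (2 * h - n'))"
    by (rule sum_mono2) (auto intro!: mult_nonneg_nonneg order_trans[OF zero_le_one green_ge_1])
  also have "\<dots> = real (2 * h) / real N"
    by (rule renewal_identity[OF assms, symmetric])
  finally show ?thesis .
qed

lemma map_pmf_uniform_residue_shift:
  assumes "N \<ge> 1"
  shows "map_pmf (\<lambda>x0. (x0 + s) mod int N) (pmf_of_set {0..<int N}) = pmf_of_set {0..<int N}"
proof (rule map_pmf_of_set_bij_betw)
  show "bij_betw (\<lambda>x0. (x0 + s) mod int N) {0..<int N} {0..<int N}"
    by (rule bij_betwI[where g = "\<lambda>x. (x - s) mod int N"])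
       (use assms in \<open>auto simp: mod_add_left_eq mod_diff_left_eq\<close>)
qed (use assms in auto)

lemma walk_pmf_endpoint_uniform:
  assumes "N \<ge> 1"
  shows "map_pmf (\<lambda>(x0, u). (x0 + sum_list u) mod int N) (walk_pmf d N h) = pmf_of_set {0..<int N}"
proof -
  have "map_pmf (\<lambda>(x0, u). (x0 + sum_list u) mod int N) (walk_pmf d N h)
      = bind_pmf (iid_list d h) (\<lambda>u. map_pmf (\<lambda>x0. (x0 + sum_list u) mod int N) (pmf_of_set {0..<int N}))"
    unfolding walk_pmf_def pair_pmf_def map_pmf_def
    by (simp add: bind_assoc_pmf bind_return_pmf) (subst bind_commute_pmf, rule refl)
  then show ?thesis by (simp add: map_pmf_uniform_residue_shift[OF assms])
qed

text \<open>The uniform start makes the walk stationary, so hitting 0 during the times h+1..h+b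
  has the same probability as during 1..b.\<close>

lemma hit_prob_shift:
  assumes "N \<ge> 1"
  shows "measure_pmf.prob (walk_pmf d N (h + b)) {(x0, ws). \<exists>n\<in>{1..b}. walk_pos N x0 ws (h + n) = 0}
       = hit_prob d N b b"
proof -
  let ?k = "\<lambda>((x0, u), v). ((x0 + sum_list u) mod int N, v)"
  have "measure_pmf.prob (walk_pmf d N (h + b)) {(x0, ws). \<exists>n\<in>{1..b}. walk_pos N x0 ws (h + n) = 0}
      = measure_pmf.prob (pair_pmf (walk_pmf d N h) (iid_list d b)) (?k -` hits_zero N b)"
    unfolding walk_pmf_add measure_map_pmf
  proof (rule measure_pmf_prob_cong)
    fix x assume "x \<in> set_pmf (pair_pmf (walk_pmf d N h) (iid_list d b))"
    then obtain x0 u v where x: "x = ((x0, u), v)" "length u = h"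
      by (auto dest!: length_walk_pmf)
    then have "walk_pos N x0 (u @ v) (h + n) = walk_pos N ((x0 + sum_list u) mod int N) v n" for n
      by (simp add: walk_pos_def mod_add_left_eq add.assoc)
    then show "x \<in> (\<lambda>((x0, u), v). (x0, u @ v)) -` {(x0, ws). \<exists>n\<in>{1..b}. walk_pos N x0 ws (h + n) = 0}
        \<longleftrightarrow> x \<in> ?k -` hits_zero N b"
      using x by (simp add: hits_zero_def)
  qed
  also have "\<dots> = measure_pmf.prob (map_pmf ?k (pair_pmf (walk_pmf d N h) (iid_list d b))) (hits_zero N b)"
    by (simp add: measure_map_pmf)
  also have "map_pmf ?k (pair_pmf (walk_pmf d N h) (iid_list d b)) = walk_pmf d N b"
  proof -
    have "map_pmf ?k (pair_pmf (walk_pmf d N h) (iid_list d b))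
        = map_pmf (\<lambda>(a, b). ((\<lambda>(x0, u). (x0 + sum_list u) mod int N) a, id b))
            (pair_pmf (walk_pmf d N h) (iid_list d b))"
      by (intro map_pmf_cong) auto
    also have "\<dots> = pair_pmf (pmf_of_set {0..<int N}) (iid_list d b)"
      by (simp only: map_pair walk_pmf_endpoint_uniform[OF assms] pmf.map_id)
    finally show ?thesis by (simp add: walk_pmf_def)
  qed
  finally show ?thesis by (simp add: hit_prob_def)
qed

lemma hit_prob_le_twice:
  assumes "N \<ge> 1" "h \<le> N" "N - h \<le> h"
  shows "hit_prob d N N N \<le> 2 * hit_prob d N h h"
proof -
  define late where "late = {(x0, ws). \<exists>n\<in>{1..N - h}. walk_pos N x0 ws (h + n) = 0}"
  have "hits_zero N N \<subseteq> hits_zero N h \<union> late"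
  proof
    fix x assume "x \<in> hits_zero N N"
    then obtain x0 ws n where x: "x = (x0, ws)" "n \<in> {1..N}" "walk_pos N x0 ws n = 0"
      unfolding hits_zero_def by auto
    show "x \<in> hits_zero N h \<union> late"
    proof (cases "n \<le> h")
      case True
      then show ?thesis using x by (auto simp: hits_zero_def)
    next
      case False
      then have "n - h \<in> {1..N - h}" "h + (n - h) = n" using x by auto
      then have "(x0, ws) \<in> late" using x unfolding late_def by (metis (mono_tags, lifting) case_prodI mem_Collect_eq)
      then show ?thesis using x by blast
    qed
  qed
  then have "hit_prob d N N N \<le> measure_pmf.prob (walk_pmf d N N) (hits_zero N h \<union> late)"
    unfolding hit_prob_def by (rule measure_pmf.finite_measure_mono) auto
  also have "\<dots> \<le> hit_prob d N N h + measure_pmf.prob (walk_pmf d N N) late"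
    unfolding hit_prob_def by (rule measure_Un_le) auto
  also have "measure_pmf.prob (walk_pmf d N N) late = hit_prob d N (N - h) (N - h)"
    using hit_prob_shift[OF assms(1), of d h "N - h"] assms unfolding late_def by simp
  also have "\<dots> = hit_prob d N h (N - h)"
    using hit_prob_take[of "N - h" h d N] assms by simp
  also have "\<dots> \<le> hit_prob d N h h" using hit_prob_mono assms by blast
  also have "hit_prob d N N h = hit_prob d N h h" using hit_prob_take assms by blast
  finally show ?thesis by simp
qed

section \<open>Reduction to a single walk\<close>

definition diff_pmf :: "int pmf \<Rightarrow> int pmf \<Rightarrow> int pmf" where
  "diff_pmf p q = map_pmf (\<lambda>(x, y). x - y) (pair_pmf p q)"

lemma sum_list_map2_diff:
  "length xs = length ys \<Longrightarrow> sum_list (map2 (\<lambda>x y. x - y) xs ys) = sum_list xs - sum_list (ys :: int list)"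
  by (induction xs ys rule: list_induct2) auto

lemma int_mod_eq_iff_diff_mod_eq_0: "(a::int) mod m = b mod m \<longleftrightarrow> (b - a) mod m = 0"
  by (metis mod_eq_dvd_iff mod_eq_0_iff_dvd)

lemma capture_prob_eq_hit_prob: "capture_prob p q N = hit_prob (diff_pmf p q) N N N"
proof -
  let ?A = "iid_list p N" and ?B = "iid_list q N" and ?U = "pmf_of_set {0..<int N}"
  let ?diff = "\<lambda>(x0, xs, ys). (x0, map2 (\<lambda>x y. x - y) xs ys)"
  have joint: "hr_joint p q N = pair_pmf ?U (pair_pmf ?A ?B)"
    unfolding hr_joint_def pair_pmf_def by (simp add: bind_assoc_pmf bind_return_pmf)
  have walk: "walk_pmf (diff_pmf p q) N N = map_pmf ?diff (pair_pmf ?U (pair_pmf ?A ?B))"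
    unfolding walk_pmf_def diff_pmf_def map_pmf_map2_iid_list[symmetric, of "\<lambda>x y. x - y"]
    by (auto simp add: pair_map_pmf2 pmf.map_comp o_def case_prod_beta apsnd_def map_prod_def
        intro!: map_pmf_cong)
  show ?thesis
    unfolding capture_prob_def hit_prob_def joint walk measure_map_pmf
  proof (rule measure_pmf_prob_cong)
    fix z assume "z \<in> set_pmf (pair_pmf ?U (pair_pmf ?A ?B))"
    then obtain x0 xs ys where z: "z = (x0, xs, ys)" "length xs = N" "length ys = N"
      by (auto dest!: length_iid_list)
    have "hunter N ys n = rabbit N x0 xs n \<longleftrightarrow> walk_pos N x0 (map2 (\<lambda>x y. x - y) xs ys) n = 0" for n
    proof -
      have "sum_list (take n (map2 (\<lambda>x y. x - y) xs ys)) = sum_list (take n xs) - sum_list (take n ys)"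
        using z by (simp add: take_map take_zip sum_list_map2_diff)
      then show ?thesis
        unfolding hunter_def rabbit_def walk_pos_def int_mod_eq_iff_diff_mod_eq_0 by (simp add: add_diff_eq)
    qed
    then show "z \<in> {(x0, xs, ys). \<exists>n\<in>{1..N}. hunter N ys n = rabbit N x0 xs n} \<longleftrightarrow> z \<in> ?diff -` hits_zero N N"
      using z by (simp add: hits_zero_def)
  qed
qed

lemma capture_prob_ge_inverse_green:
  assumes "N \<ge> 1"
  shows "1 / green (diff_pmf p q) N (N - 1) \<le> capture_prob p q N"
proof -
  have "1 \<le> hit_prob (diff_pmf p q) N N N * green (diff_pmf p q) N (N - 1)"
    by (rule hit_prob_green_ge_1[OF assms])
  moreover have "0 < green (diff_pmf p q) N (N - 1)" by (rule less_le_trans[OF zero_less_one green_ge_1])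
  ultimately show ?thesis by (simp add: capture_prob_eq_hit_prob divide_le_eq mult.commute)
qed

lemma capture_prob_ge_inverse_bound:
  assumes "N \<ge> 1" "green (diff_pmf p q) N (N - 1) \<le> B"
  shows "1 / B \<le> capture_prob p q N"
proof -
  have "1 / B \<le> 1 / green (diff_pmf p q) N (N - 1)"
    using assms(2) green_ge_1[of "diff_pmf p q" N "N - 1"] by (intro divide_left_mono) auto
  also have "\<dots> \<le> capture_prob p q N" by (rule capture_prob_ge_inverse_green[OF assms(1)])
  finally show ?thesis .
qed

lemma capture_prob_le_inverse_green:
  assumes "N \<ge> 2"
  shows "capture_prob p q N \<le> 3 / green (diff_pmf p q) N (N - N div 2)"
proof -
  define h where "h = N - N div 2"
  define G where "G = green (diff_pmf p q) N h"
  have G: "0 < G" unfolding G_def by (rule less_le_trans[OF zero_less_one green_ge_1])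
  have "G * hit_prob (diff_pmf p q) N h h \<le> real (2 * h) / real N"
    unfolding G_def using green_hit_prob_le assms by simp
  then have "hit_prob (diff_pmf p q) N h h \<le> real (2 * h) / real N / G"
    using G by (metis pos_le_divide_eq mult.commute)
  moreover have "capture_prob p q N \<le> 2 * hit_prob (diff_pmf p q) N h h"
    unfolding capture_prob_eq_hit_prob h_def using assms by (intro hit_prob_le_twice) auto
  ultimately have "capture_prob p q N \<le> 2 * real (2 * h) / real N / G" by simp
  also have "\<dots> \<le> 3 / G"
  proof (intro divide_right_mono)
    have "real (2 * h) \<le> real N + 1" unfolding h_def by linarith
    then show "2 * real (2 * h) / real N \<le> 3" using assms by (simp add: field_simps)
  qed (use G in simp)
  finally show ?thesis by (simp add: G_def h_def)
qed

section \<open>Fourier analysis on the residues mod N\<close>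

lemma integrable_cis_pmf: "integrable (measure_pmf M) (\<lambda>x. cis (f x))"
  by (rule measure_pmf.integrable_const_bound[where B = 1]) auto

lemma expectation_pmf_infsetsum:
  "measure_pmf.expectation p (f :: _ \<Rightarrow> complex) = infsetsum (\<lambda>x. of_real (pmf p x) * f x) UNIV"
  unfolding infsetsum_def measure_pmf_eq_density
  by (subst integral_density) (simp_all add: scaleR_conv_of_real)

lemma expectation_pair_pmf_mult:
  fixes A :: "'a::countable pmf" and B :: "'b::countable pmf"
    and f :: "'a \<Rightarrow> complex" and g :: "'b \<Rightarrow> complex"
  assumes f: "\<And>x. norm (f x) \<le> 1" and g: "\<And>x. norm (g x) \<le> 1"
  shows "measure_pmf.expectation (pair_pmf A B) (\<lambda>x. f (fst x) * g (snd x))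
       = measure_pmf.expectation A f * measure_pmf.expectation B g"
proof -
  have sA: "Infinite_Set_Sum.abs_summable_on (\<lambda>x. of_real (pmf A x) * f x) UNIV"
    by (rule abs_summable_on_comparison_test'[OF pmf_abs_summable])
       (use f in \<open>auto simp: norm_mult intro: mult_left_le\<close>)
  have sB: "Infinite_Set_Sum.abs_summable_on (\<lambda>x. of_real (pmf B x) * g x) UNIV"
    by (rule abs_summable_on_comparison_test'[OF pmf_abs_summable])
       (use g in \<open>auto simp: norm_mult intro: mult_left_le\<close>)
  have "measure_pmf.expectation (pair_pmf A B) (\<lambda>x. f (fst x) * g (snd x))
     = infsetsum (\<lambda>(a, b). (of_real (pmf A a) * f a) * (of_real (pmf B b) * g b)) (UNIV \<times> UNIV)"
    unfolding expectation_pmf_infsetsum by (intro infsetsum_cong) (auto simp: pmf_pair)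
  also have "\<dots> = measure_pmf.expectation A f * measure_pmf.expectation B g"
    unfolding expectation_pmf_infsetsum by (rule infsetsum_product) (use sA sB in auto)
  finally show ?thesis .
qed

lemma char_fun_iid_list_sum:
  "measure_pmf.expectation (iid_list d k) (\<lambda>ws. cis (\<theta> * of_int (sum_list ws))) = char_fun d \<theta> ^ k"
proof (induction k)
  case 0
  then show ?case by simp
next
  case (Suc k)
  have "measure_pmf.expectation (iid_list d (Suc k)) (\<lambda>ws. cis (\<theta> * of_int (sum_list ws)))
     = measure_pmf.expectation (pair_pmf d (iid_list d k))
          (\<lambda>x. cis (\<theta> * of_int (fst x)) * cis (\<theta> * of_int (sum_list (snd x))))"
    unfolding iid_list_Suc_pair by (simp add: case_prod_beta cis_mult distrib_left)
  also have "\<dots> = char_fun d \<theta> * char_fun d \<theta> ^ k"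
    by (subst expectation_pair_pmf_mult) (auto simp: char_fun_def Suc)
  finally show ?case by simp
qed

lemma char_fun_diff_pmf: "char_fun (diff_pmf p q) \<theta> = char_fun p \<theta> * char_fun q (- \<theta>)"
proof -
  have "char_fun (diff_pmf p q) \<theta>
     = measure_pmf.expectation (pair_pmf p q) (\<lambda>x. cis (\<theta> * of_int (fst x)) * cis (- \<theta> * of_int (snd x)))"
    unfolding char_fun_def diff_pmf_def by (simp add: case_prod_beta cis_mult algebra_simps)
  also have "\<dots> = char_fun p \<theta> * char_fun q (- \<theta>)"
    by (subst expectation_pair_pmf_mult) (auto simp: char_fun_def)
  finally show ?thesis .
qed

lemma char_fun_0 [simp]: "char_fun d 0 = 1"
  by (simp add: char_fun_def measure_pmf.prob_space)

lemma norm_char_fun_le_1: "norm (char_fun p \<theta>) \<le> 1"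
  unfolding char_fun_def by (rule order_trans[OF integral_norm_bound]) (simp add: measure_pmf.prob_space)

lemma norm_char_fun_diff_pmf_le: "norm (char_fun (diff_pmf p q) \<theta>) \<le> norm (char_fun p \<theta>)"
  using norm_char_fun_le_1[of q "- \<theta>"]
  by (simp add: char_fun_diff_pmf norm_mult mult_left_le)

lemma char_fun_minus_2pi: "char_fun d (\<theta> - 2 * pi) = char_fun d \<theta>"
proof -
  have "cis ((\<theta> - 2 * pi) * of_int k) = cis (\<theta> * of_int k)" for k :: int
  proof -
    have "cis ((\<theta> - 2 * pi) * of_int k) = cis (\<theta> * of_int k) / cis (2 * pi * of_int k)"
      by (simp add: cis_divide algebra_simps)
    also have "cis (2 * pi * of_int k) = 1" by (simp add: cis.ctr complex_eq_iff)
    finally show ?thesis by simp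
  qed
  then show ?thesis unfolding char_fun_def by simp
qed

lemma sum_cis_roots_of_unity:
  fixes s :: int
  assumes "N \<ge> 1"
  shows "(\<Sum>j<N. cis (2 * pi * real j / real N * of_int s)) = (if s mod int N = 0 then of_nat N else 0)"
proof (cases "s mod int N = 0")
  case True
  then obtain m where m: "s = int N * m" by auto
  have "cis (2 * pi * real j / real N * of_int s) = 1" for j
  proof -
    have "2 * pi * real j / real N * of_int s = 2 * pi * of_int (int j * m)"
      using assms by (simp add: m field_simps)
    then show ?thesis by (simp add: cis.ctr complex_eq_iff del: of_int_mult)
  qed
  then show ?thesis using True by simp
next
  case False
  define z where "z = cis (2 * pi * of_int s / real N)"
  have zj: "cis (2 * pi * real j / real N * of_int s) = z ^ j" for j
  proof -
    have "z ^ j = cis (real j * (2 * pi * of_int s / real N))" by (simp only: z_def Complex.DeMoivre)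
    then show ?thesis by (simp add: field_simps)
  qed
  have "z ^ N = cis (2 * pi * of_int s)"
    unfolding z_def Complex.DeMoivre using assms by simp
  then have zN: "z ^ N = 1" by (simp add: cis.ctr complex_eq_iff)
  have "z \<noteq> 1"
  proof
    assume "z = 1"
    then have "cos (2 * pi * of_int s / real N) = 1" unfolding z_def by (metis cis.sel(1) one_complex.sel(1))
    then obtain m :: int where "2 * pi * of_int s / real N = of_int m * 2 * pi" using cos_one_2pi_int by blast
    then have "of_int s = real_of_int m * real N" using assms by (simp add: field_simps)
    then have "s = m * int N" by (metis of_int_eq_iff of_int_mult of_int_of_nat_eq)
    then show False using False by simp
  qed
  then have "(\<Sum>j<N. z ^ j) = 0" using zN by (simp add: sum_gp_strict)
  then show ?thesis using False zj by simp
qed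

lemma return_prob_fourier:
  assumes N: "N \<ge> 1"
  shows "complex_of_real (return_prob d N k) = (\<Sum>j<N. char_fun d (2 * pi * real j / real N) ^ k) / of_nat N"
proof -
  let ?M = "measure_pmf (iid_list d k)"
  have "complex_of_real (return_prob d N k)
      = integral\<^sup>L ?M (\<lambda>ws. complex_of_real (indicator {ws. sum_list ws mod int N = 0} ws))"
    by (simp add: return_prob_def measure_pmf.emeasure_eq_measure)
  also have "\<dots> = integral\<^sup>L ?M (\<lambda>ws. (\<Sum>j<N. cis (2 * pi * real j / real N * of_int (sum_list ws))) / of_nat N)"
    by (intro Bochner_Integration.integral_cong refl)
       (subst sum_cis_roots_of_unity[OF N], use N in \<open>simp add: indicator_def\<close>)
  also have "\<dots> = (\<Sum>j<N. integral\<^sup>L ?M (\<lambda>ws. cis (2 * pi * real j / real N * of_int (sum_list ws)))) / of_nat N"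
    by (simp add: integrable_cis_pmf)
  also have "\<dots> = (\<Sum>j<N. char_fun d (2 * pi * real j / real N) ^ k) / of_nat N"
    by (simp only: char_fun_iid_list_sum)
  finally show ?thesis .
qed

lemma return_prob_eq_re:
  assumes "N \<ge> 1"
  shows "return_prob d N k = (\<Sum>j<N. Re (char_fun d (2 * pi * real j / real N) ^ k)) / real N"
  using arg_cong[OF return_prob_fourier[OF assms, of d k], of Re] by (simp add: Re_divide_of_nat)

lemma green_eq_re:
  assumes "N \<ge> 1"
  shows "green d N m = (\<Sum>j<N. Re (\<Sum>k\<le>m. char_fun d (2 * pi * real j / real N) ^ k)) / real N"
  unfolding green_def return_prob_eq_re[OF assms]
  by (simp add: sum_divide_distrib[symmetric] sum.swap[of _ "{..m}"])

lemma return_prob_le: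
  assumes N: "N \<ge> 1"
  shows "return_prob d N k \<le> (1 + (\<Sum>j\<in>{1..N-1}. norm (char_fun d (2 * pi * real j / real N)) ^ k)) / real N"
proof -
  have "return_prob d N k = Re (\<Sum>j<N. char_fun d (2 * pi * real j / real N) ^ k) / real N"
    using arg_cong[OF return_prob_fourier[OF N, of d k], of Re] by (simp add: Re_divide_of_nat)
  also have "\<dots> \<le> (\<Sum>j<N. norm (char_fun d (2 * pi * real j / real N)) ^ k) / real N"
    by (intro divide_right_mono order_trans[OF complex_Re_le_cmod] order_trans[OF norm_sum])
       (auto simp: norm_power)
  also have "{..<N} = insert 0 {1..N-1}" using N by auto
  finally show ?thesis by simp
qed

section \<open>The characteristic function away from and near the origin\<close>

lemma cis_eq_char_fun_if_norm_eq_1: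
  assumes norm1: "norm (char_fun p \<theta>) = 1" and k: "k \<in> set_pmf p"
  shows "cis (\<theta> * of_int k) = char_fun p \<theta>"
proof -
  define z where "z = char_fun p \<theta>"
  have nz: "norm z = 1" using norm1 z_def by simp
  have zc: "cnj z * z = 1"
    using complex_norm_square[of z] nz by (simp add: mult.commute)
  have le1: "Re (cnj z * cis (\<theta> * of_int k)) \<le> 1" for k
    using complex_Re_le_cmod[of "cnj z * cis (\<theta> * of_int k)"] nz by (simp add: norm_mult)
  have int: "integrable (measure_pmf p) (\<lambda>k. Re (cnj z * cis (\<theta> * of_int k)))"
  proof (rule measure_pmf.integrable_const_bound[where B = 1])
    show "AE x in measure_pmf p. norm (Re (cnj z * cis (\<theta> * of_int x))) \<le> 1"
    proof (rule AE_pmfI)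
      fix k
      have "\<bar>Re (cnj z * cis (\<theta> * of_int k))\<bar> \<le> norm (cnj z * cis (\<theta> * of_int k))"
        by (rule abs_Re_le_cmod)
      then show "norm (Re (cnj z * cis (\<theta> * of_int k))) \<le> 1" using nz by (simp add: norm_mult)
    qed
  qed simp
  \<comment> \<open>\<open>E Re (conj z e^{i\<theta>X}) = |z|\<^sup>2 = 1\<close> while the integrand is at most 1\<close>
  have "cnj z * z = measure_pmf.expectation p (\<lambda>k. cnj z * cis (\<theta> * of_int k))"
    unfolding z_def char_fun_def by simp
  then have "1 = Re (measure_pmf.expectation p (\<lambda>k. cnj z * cis (\<theta> * of_int k)))"
    using zc by simp
  also have "\<dots> = measure_pmf.expectation p (\<lambda>k. Re (cnj z * cis (\<theta> * of_int k)))"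
    by (rule integral_Re[symmetric]) (simp add: integrable_cis_pmf)
  finally have "measure_pmf.expectation p (\<lambda>k. 1 - Re (cnj z * cis (\<theta> * of_int k))) = 0"
    using int by (simp add: Bochner_Integration.integral_diff measure_pmf.prob_space)
  then have "AE k in measure_pmf p. 1 - Re (cnj z * cis (\<theta> * of_int k)) = 0"
    using le1 int by (subst integral_nonneg_eq_0_iff_AE[symmetric]) auto
  then have "Re (cnj z * cis (\<theta> * of_int k)) = 1"
    using k by (simp add: AE_measure_pmf_iff)
  moreover define w where "w = cnj z * cis (\<theta> * of_int k)"
  ultimately have "norm w = 1" "Re w = 1" using nz by (simp_all add: w_def norm_mult)
  then have "Im w = 0" unfolding cmod_def by (simp add: power2_eq_square)
  then have "w = 1" using \<open>Re w = 1\<close> by (simp add: complex_eq_iff)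
  then have "z * (cnj z * cis (\<theta> * of_int k)) = z" using w_def by simp
  then show ?thesis using zc unfolding z_def by (simp add: mult.assoc[symmetric] mult.commute[of "char_fun p \<theta>"])
qed

lemma cis_eq_1_if_norm_char_fun_eq_1:
  assumes A1: "\<forall>y::int. int_subgroup_gen {y + k | k. k \<in> set_pmf p} = UNIV"
    and norm1: "norm (char_fun p \<theta>) = 1"
  shows "cis \<theta> = 1"
proof -
  obtain k0 where k0: "k0 \<in> set_pmf p" using set_pmf_not_empty[of p] by blast
  define H where "H = {n::int. cis (\<theta> * of_int n) = 1}"
  have "int_subgroup H"
    unfolding int_subgroup_def H_def
  proof (intro conjI ballI)
    fix a b assume "a \<in> {n::int. cis (\<theta> * of_int n) = 1}" "b \<in> {n::int. cis (\<theta> * of_int n) = 1}"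
    then have "cis (\<theta> * of_int a) / cis (\<theta> * of_int b) = 1" by simp
    then show "a - b \<in> {n::int. cis (\<theta> * of_int n) = 1}"
      by (simp add: cis_divide right_diff_distrib)
  qed simp
  moreover have "{- k0 + k | k. k \<in> set_pmf p} \<subseteq> H"
  proof
    fix x assume "x \<in> {- k0 + k | k. k \<in> set_pmf p}"
    then obtain k where k: "k \<in> set_pmf p" "x = - k0 + k" by auto
    then have "real_of_int k = real_of_int k0 + real_of_int x" by simp
    then have "\<theta> * of_int x = \<theta> * of_int k - \<theta> * of_int k0" by (simp add: algebra_simps)
    then have "cis (\<theta> * of_int x) = cis (\<theta> * of_int k) / cis (\<theta> * of_int k0)"
      by (simp add: cis_divide)
    then show "x \<in> H"
      using cis_eq_char_fun_if_norm_eq_1[OF norm1] k(1) k0 norm1 unfolding H_def by auto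
  qed
  ultimately have "int_subgroup_gen {- k0 + k | k. k \<in> set_pmf p} \<subseteq> H"
    unfolding int_subgroup_gen_def by blast
  then have "1 \<in> H" using A1 by blast
  then show ?thesis unfolding H_def by simp
qed

lemma continuous_on_char_fun: "continuous_on A (char_fun p)"
proof -
  have "continuous_on A (\<lambda>\<theta>. LINT k|measure_pmf p. cis (\<theta> * of_int k))"
    by (rule continuous_on_LINT_pmf[where B = 1])
       (auto intro!: continuous_on_cis continuous_on_mult_right continuous_on_id)
  then show ?thesis unfolding char_fun_def[abs_def] by simp
qed

lemma char_fun_bounded_away_from_1:
  assumes A1: "\<forall>y::int. int_subgroup_gen {y + k | k. k \<in> set_pmf p} = UNIV"
    and "0 < \<delta>"
  shows "\<exists>\<eta>>0. \<forall>\<theta>. \<delta> \<le> \<bar>\<theta>\<bar> \<and> \<bar>\<theta>\<bar> \<le> pi \<longrightarrow> norm (char_fun p \<theta>) \<le> 1 - \<eta>"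
proof -
  define S where "S = {-pi..-\<delta>} \<union> {\<delta>..pi}"
  have S: "\<theta> \<in> S \<longleftrightarrow> \<delta> \<le> \<bar>\<theta>\<bar> \<and> \<bar>\<theta>\<bar> \<le> pi" for \<theta>
    unfolding S_def using assms(2) by auto
  show ?thesis
  proof (cases "S = {}")
    case True
    then show ?thesis using S by (intro exI[of _ 1]) auto
  next
    case False
    have "compact S" unfolding S_def by (intro compact_Un compact_Icc)
    moreover have "continuous_on S (\<lambda>\<theta>. norm (char_fun p \<theta>))"
      by (intro continuous_on_norm continuous_on_char_fun)
    ultimately obtain \<theta>0 where \<theta>0: "\<theta>0 \<in> S" "\<forall>\<theta>\<in>S. norm (char_fun p \<theta>) \<le> norm (char_fun p \<theta>0)"
      using continuous_attains_sup[of S "\<lambda>\<theta>. norm (char_fun p \<theta>)"] False by blast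
    have "norm (char_fun p \<theta>0) < 1"
    proof (rule ccontr)
      assume "\<not> norm (char_fun p \<theta>0) < 1"
      then have "cis \<theta>0 = 1"
        using norm_char_fun_le_1[of p \<theta>0] by (intro cis_eq_1_if_norm_char_fun_eq_1[OF A1]) simp
      then have "cos \<theta>0 = 1" by (metis cis.sel(1) one_complex.sel(1))
      then obtain m :: int where m: "\<theta>0 = of_int m * 2 * pi" using cos_one_2pi_int by blast
      have "\<bar>\<theta>0\<bar> \<le> pi" "\<delta> \<le> \<bar>\<theta>0\<bar>" using \<theta>0(1) S by auto
      then have "m \<noteq> 0" using m assms(2) by auto
      then have "2 * pi \<le> \<bar>of_int m\<bar> * 2 * pi" by simp
      also have "\<dots> = \<bar>\<theta>0\<bar>" using m by (simp add: abs_mult)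
      finally show False using \<open>\<bar>\<theta>0\<bar> \<le> pi\<close> pi_gt_zero by linarith
    qed
    then show ?thesis
      using \<theta>0 S by (intro exI[of _ "1 - norm (char_fun p \<theta>0)"]) auto
  qed
qed

lemma char_fun_near_0_bounds:
  assumes A3: "(\<lambda>\<theta>. char_fun p \<theta> - (1 - of_real (c * \<bar>\<theta>\<bar> powr \<beta>)))
               \<in> O[at 0](\<lambda>\<theta>. of_real (\<bar>\<theta>\<bar> powr (\<beta> + \<epsilon>)))"
    and c: "0 < c" and \<beta>: "0 < \<beta>" and \<epsilon>0: "0 < \<epsilon>0" "\<epsilon>0 \<le> \<epsilon>"
  shows "\<exists>\<delta>>0. \<exists>C>0. \<delta> \<le> 1 \<and> (\<forall>\<theta>. \<theta> \<noteq> 0 \<and> \<bar>\<theta>\<bar> < \<delta> \<longrightarrow>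
           norm (char_fun p \<theta>) \<le> 1 - c * \<bar>\<theta>\<bar> powr \<beta> + C * \<bar>\<theta>\<bar> powr (\<beta> + \<epsilon>0)
         \<and> norm (char_fun p \<theta>) \<le> 1 - c / 2 * \<bar>\<theta>\<bar> powr \<beta>
         \<and> norm (1 - char_fun p \<theta>) \<le> c * \<bar>\<theta>\<bar> powr \<beta> + C * \<bar>\<theta>\<bar> powr (\<beta> + \<epsilon>0)
         \<and> C * \<bar>\<theta>\<bar> powr \<epsilon>0 \<le> c / 2)"
proof -
  obtain C where C: "C > 0" "\<forall>\<^sub>F \<theta> in at 0. norm (char_fun p \<theta> - (1 - of_real (c * \<bar>\<theta>\<bar> powr \<beta>)))
        \<le> C * norm (of_real (\<bar>\<theta>\<bar> powr (\<beta> + \<epsilon>)) :: complex)"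
    using landau_o.bigE[OF A3] by blast
  then obtain d where d: "d > 0" "\<And>\<theta>. \<theta> \<noteq> 0 \<Longrightarrow> \<bar>\<theta>\<bar> < d \<Longrightarrow>
      norm (char_fun p \<theta> - (1 - of_real (c * \<bar>\<theta>\<bar> powr \<beta>))) \<le> C * \<bar>\<theta>\<bar> powr (\<beta> + \<epsilon>)"
    unfolding eventually_at by auto
  \<comment> \<open>\<open>\<delta>\<close> is small enough that the error term is at most half the main term and \<open>c|\<theta>|^\<beta> \<le> 1\<close>\<close>
  define d2 where "d2 = (c / (2 * C)) powr (1 / \<epsilon>0)"
  define d3 where "d3 = (1 / c) powr (1 / \<beta>)"
  define \<delta> where "\<delta> = min (min d 1) (min d2 d3)"
  have \<delta>: "\<delta> > 0" "\<delta> \<le> 1" using c C d by (auto simp: \<delta>_def d2_def d3_def)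
  have "norm (char_fun p \<theta>) \<le> 1 - c * \<bar>\<theta>\<bar> powr \<beta> + C * \<bar>\<theta>\<bar> powr (\<beta> + \<epsilon>0)
         \<and> norm (char_fun p \<theta>) \<le> 1 - c / 2 * \<bar>\<theta>\<bar> powr \<beta>
         \<and> norm (1 - char_fun p \<theta>) \<le> c * \<bar>\<theta>\<bar> powr \<beta> + C * \<bar>\<theta>\<bar> powr (\<beta> + \<epsilon>0)
         \<and> C * \<bar>\<theta>\<bar> powr \<epsilon>0 \<le> c / 2"
    if \<theta>: "\<theta> \<noteq> 0" "\<bar>\<theta>\<bar> < \<delta>" for \<theta>
  proof -
    define t where "t = \<bar>\<theta>\<bar>"
    have t: "0 < t" "t < d" "t < 1" "t < d2" "t < d3" using \<theta> by (auto simp: t_def \<delta>_def)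
    have "t powr \<epsilon>0 < d2 powr \<epsilon>0" using t \<epsilon>0 by (intro powr_less_mono2) auto
    also have "d2 powr \<epsilon>0 = c / (2 * C)" using c C \<epsilon>0 by (simp add: d2_def powr_powr)
    finally have err: "C * t powr \<epsilon>0 \<le> c / 2" using C by (simp add: field_simps)
    have "t powr \<beta> < d3 powr \<beta>" using t \<beta> by (intro powr_less_mono2) auto
    also have "d3 powr \<beta> = 1 / c" using c \<beta> by (simp add: d3_def powr_powr)
    finally have main: "c * t powr \<beta> \<le> 1" using c by (simp add: field_simps)
    have "t powr (\<beta> + \<epsilon>) \<le> t powr (\<beta> + \<epsilon>0)" using t \<epsilon>0 by (intro powr_mono') auto
    then have R: "norm (char_fun p \<theta> - (1 - of_real (c * t powr \<beta>))) \<le> C * t powr (\<beta> + \<epsilon>0)"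
      using d(2)[OF \<theta>(1)] t C unfolding t_def by (meson mult_left_mono less_le order_trans)
    have "norm (1 - of_real (c * t powr \<beta>) :: complex) = 1 - c * t powr \<beta>"
    proof -
      have "(1 - of_real (c * t powr \<beta>) :: complex) = of_real (1 - c * t powr \<beta>)" by simp
      then show ?thesis using main by (simp only: norm_of_real)
    qed
    then have A: "norm (char_fun p \<theta>) \<le> 1 - c * t powr \<beta> + C * t powr (\<beta> + \<epsilon>0)"
      using norm_triangle_ineq2[of "char_fun p \<theta>" "1 - of_real (c * t powr \<beta>)"] R by simp
    have "C * t powr (\<beta> + \<epsilon>0) \<le> c / 2 * t powr \<beta>"
      using mult_right_mono[OF err, of "t powr \<beta>"] t by (simp add: powr_add mult_ac)
    then have B: "norm (char_fun p \<theta>) \<le> 1 - c / 2 * t powr \<beta>" using A by simp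
    have "1 - char_fun p \<theta> = of_real (c * t powr \<beta>) - (char_fun p \<theta> - (1 - of_real (c * t powr \<beta>)))"
      by simp
    then have "norm (1 - char_fun p \<theta>) \<le> norm (of_real (c * t powr \<beta>) :: complex)
        + norm (char_fun p \<theta> - (1 - of_real (c * t powr \<beta>)))"
      by (metis norm_triangle_ineq4)
    also have "\<dots> \<le> c * t powr \<beta> + C * t powr (\<beta> + \<epsilon>0)" using R c t by (simp add: norm_mult)
    finally show ?thesis using A B err unfolding t_def by simp
  qed
  then show ?thesis using \<delta> C by (intro exI[of _ \<delta>] exI[of _ C]) auto
qed

lemma norm_one_minus_cis: "norm (1 - cis t) \<le> \<bar>t\<bar>"
proof -
  have "norm (1 - cis t) = 2 * \<bar>sin (t / 2)\<bar>"
    by (simp add: norm_minus_commute[of 1] cis_conv_exp dist_exp_i_1)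
  also have "\<dots> \<le> 2 * \<bar>t / 2\<bar>" using abs_sin_x_le_abs_x[of "t / 2"] by simp
  finally show ?thesis by simp
qed

lemma norm_one_minus_char_fun_le:
  assumes "set_pmf q \<subseteq> {-1, 0, 1}"
  shows "norm (1 - char_fun q \<theta>) \<le> \<bar>\<theta>\<bar>"
proof -
  have "1 - char_fun q \<theta> = measure_pmf.expectation q (\<lambda>k. 1 - cis (\<theta> * of_int k))"
    unfolding char_fun_def
    by (subst Bochner_Integration.integral_diff) (auto simp: integrable_cis_pmf measure_pmf.prob_space)
  also have "norm \<dots> \<le> measure_pmf.expectation q (\<lambda>k. norm (1 - cis (\<theta> * of_int k)))"
    by (rule integral_norm_bound)
  also have "\<dots> \<le> measure_pmf.expectation q (\<lambda>k. \<bar>\<theta>\<bar>)"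
  proof (rule integral_mono_AE)
    show "integrable (measure_pmf q) (\<lambda>k. norm (1 - cis (\<theta> * of_int k)))"
      by (rule measure_pmf.integrable_const_bound[where B = 2])
         (auto intro!: AE_pmfI order_trans[OF norm_triangle_ineq4])
    show "AE k in measure_pmf q. norm (1 - cis (\<theta> * of_int k)) \<le> \<bar>\<theta>\<bar>"
    proof (rule AE_pmfI)
      fix k assume "k \<in> set_pmf q"
      then have "\<bar>\<theta> * of_int k\<bar> \<le> \<bar>\<theta>\<bar>" using assms by (auto simp: abs_mult)
      then show "norm (1 - cis (\<theta> * of_int k)) \<le> \<bar>\<theta>\<bar>" using norm_one_minus_cis order_trans by blast
    qed
  qed simp
  also have "\<dots> = \<bar>\<theta>\<bar>" by (simp add: measure_pmf.prob_space)
  finally show ?thesis .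
qed

lemma powr_diff_mvt:
  fixes a r :: real
  assumes "0 < a"
  shows "\<exists>z. a < z \<and> z < a + 1 \<and> (a + 1) powr r - a powr r = r * z powr (r - 1)"
proof -
  have "\<exists>z>a. z < a + 1 \<and> (\<lambda>x. x powr r) (a + 1) - (\<lambda>x. x powr r) a = (a + 1 - a) * (r * z powr (r - 1))"
    by (rule MVT2[where f'="\<lambda>x. r * x powr (r - 1)"]) (use assms in \<open>auto intro!: has_real_derivative_powr\<close>)
  then show ?thesis by auto
qed

lemma sum_powr_neg_le:
  fixes s :: real
  assumes s: "0 < s" "s < 1"
  shows "(\<Sum>i\<in>{1..m}. real i powr (- s)) \<le> real m powr (1 - s) / (1 - s)"
proof (induction m)
  case 0 then show ?case by simp
next
  case (Suc m)
  have step: "real (Suc m) powr (- s) \<le> (real (Suc m) powr (1 - s) - real m powr (1 - s)) / (1 - s)"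
  proof (cases "m = 0")
    case True then show ?thesis using s by (simp add: field_simps)
  next
    case False
    then obtain z where z: "real m < z" "z < real m + 1"
      "(real m + 1) powr (1 - s) - real m powr (1 - s) = (1 - s) * z powr (1 - s - 1)"
      using powr_diff_mvt[of "real m" "1 - s"] by auto
    have "real (Suc m) powr (- s) \<le> z powr (- s)"
      using z False s by (intro powr_mono2') auto
    also have "\<dots> = (real (Suc m) powr (1 - s) - real m powr (1 - s)) / (1 - s)"
      using z(3) s by (simp add: field_simps)
    finally show ?thesis .
  qed
  show ?case using Suc step by (simp add: diff_divide_distrib)
qed

lemma sum_powr_neg_between_le:
  fixes b :: real
  assumes b: "1 < b" and J: "1 \<le> J"
  shows "(\<Sum>i\<in>{J<..J+k}. real i powr (- b)) \<le> (real J powr (1 - b) - real (J + k) powr (1 - b)) / (b - 1)"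
proof (induction k)
  case 0 then show ?case by simp
next
  case (Suc k)
  obtain z where z: "real (J+k) < z" "z < real (J+k) + 1"
    "(real (J+k) + 1) powr (1 - b) - real (J+k) powr (1 - b) = (1 - b) * z powr (1 - b - 1)"
    using powr_diff_mvt[of "real (J+k)" "1 - b"] J by auto
  have "real (J + Suc k) powr (- b) \<le> z powr (- b)"
    using z J b by (intro powr_mono2') auto
  also have "\<dots> = (real (J+k) powr (1 - b) - real (J + Suc k) powr (1 - b)) / (b - 1)"
    using z(3) b by (simp add: field_simps)
  finally have step: "real (J + Suc k) powr (- b) \<le> (real (J+k) powr (1 - b) - real (J + Suc k) powr (1 - b)) / (b - 1)" .
  have "{J<..J + Suc k} = insert (J + Suc k) {J<..J+k}" by auto
  then have "(\<Sum>i\<in>{J<..J + Suc k}. real i powr (- b)) = real (J + Suc k) powr (- b) + (\<Sum>i\<in>{J<..J+k}. real i powr (- b))"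
    by simp
  also have "\<dots> \<le> (real J powr (1 - b) - real (J + Suc k) powr (1 - b)) / (b - 1)"
    using Suc step b by (simp add: field_simps)
  finally show ?case .
qed

lemma sum_powr_neg_tail_le:
  fixes b :: real
  assumes b: "1 < b" and J: "1 \<le> J"
  shows "(\<Sum>i\<in>{J<..m}. real i powr (- b)) \<le> real J powr (1 - b) / (b - 1)"
proof (cases "m \<le> J")
  case True then show ?thesis using b by simp
next
  case False
  then obtain k where k: "m = J + k" by (metis le_add_diff_inverse nat_le_linear)
  have "(\<Sum>i\<in>{J<..m}. real i powr (- b)) \<le> (real J powr (1 - b) - real (J + k) powr (1 - b)) / (b - 1)"
    unfolding k by (rule sum_powr_neg_between_le[OF b J])
  also have "\<dots> \<le> real J powr (1 - b) / (b - 1)" using b by (simp add: divide_right_mono)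
  finally show ?thesis .
qed

lemma sum_fold_min_le:
  fixes F :: "nat \<Rightarrow> real"
  assumes F: "\<And>j. 0 \<le> F j"
  shows "(\<Sum>j\<in>{1..N-1}. F (min j (N - j))) \<le> 2 * (\<Sum>j\<in>{1..N div 2}. F j)"
proof -
  have split: "{1..N-1} = {1..N div 2} \<union> {N div 2<..N-1}" by auto
  have "(\<Sum>j\<in>{1..N-1}. F (min j (N - j))) = (\<Sum>j\<in>{1..N div 2}. F (min j (N - j))) + (\<Sum>j\<in>{N div 2<..N-1}. F (min j (N - j)))"
    unfolding split by (rule sum.union_disjoint) auto
  also have "(\<Sum>j\<in>{1..N div 2}. F (min j (N - j))) = (\<Sum>j\<in>{1..N div 2}. F j)"
    by (intro sum.cong refl) (auto simp: min_def)
  also have "(\<Sum>j\<in>{N div 2<..N-1}. F (min j (N - j))) = (\<Sum>j\<in>{N div 2<..N-1}. F (N - j))"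
    by (intro sum.cong refl) (auto simp: min_def)
  also have "\<dots> = (\<Sum>i\<in>(\<lambda>j. N - j) ` {N div 2<..N-1}. F i)"
    by (subst sum.reindex) (auto simp: inj_on_def)
  also have "\<dots> \<le> (\<Sum>j\<in>{1..N div 2}. F j)"
    by (rule sum_mono2) (auto simp: F)
  finally show ?thesis by simp
qed

lemma harm_le_ln_add_1: "1 \<le> n \<Longrightarrow> harm n \<le> ln (real n) + (1::real)"
  using euler_mascheroni_sequence_decreasing[of 1 n] by (simp add: harm_def)

lemma sum_power_le_inverse:
  fixes r :: real
  assumes "0 \<le> r" "r < 1"
  shows "(\<Sum>k\<in>{1..m}. r ^ k) \<le> 1 / (1 - r)"
proof -
  have "(\<Sum>k\<in>{1..m}. r ^ k) \<le> (\<Sum>k<Suc m. r ^ k)"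
    by (rule sum_mono2) (use assms in auto)
  also have "\<dots> = (1 - r ^ Suc m) / (1 - r)"
  proof -
    have "r \<noteq> 1" using assms by simp
    then show ?thesis by (simp only: sum_gp_strict if_False)
  qed
  also have "\<dots> \<le> 1 / (1 - r)" using assms by (intro divide_right_mono) auto
  finally show ?thesis .
qed

lemma abs_angle_powr:
  assumes Npos: "0 < real N"
  shows "\<bar>2 * pi * real i / real N\<bar> powr (- \<beta>) = (2 * pi) powr (- \<beta>) * real N powr \<beta> * real i powr (- \<beta>)"
proof -
  have "\<bar>2 * pi * real i / real N\<bar> = (2 * pi / real N) * real i" using Npos by simp
  then have "\<bar>2 * pi * real i / real N\<bar> powr (- \<beta>) = (2 * pi / real N * real i) powr (- \<beta>)"
    by (simp only:)
  also have "\<dots> = (2 * pi / real N) powr (- \<beta>) * real i powr (- \<beta>)"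
    by (rule powr_mult)
  also have "(2 * pi / real N) powr (- \<beta>) = (2 * pi) powr (- \<beta>) * real N powr \<beta>"
  proof -
    have "(2 * pi / real N) powr (- \<beta>) = (2 * pi) powr (- \<beta>) / real N powr (- \<beta>)" by (rule powr_divide)
    also have "real N powr (- \<beta>) = inverse (real N powr \<beta>)" by (rule powr_minus)
    finally show ?thesis by (simp add: divide_inverse)
  qed
  finally show ?thesis .
qed

lemma Re_inverse_ge:
  fixes z :: complex
  assumes "a \<le> Re z" "0 < a" "norm z \<le> b"
  shows "a / b\<^sup>2 \<le> Re (inverse z)"
proof -
  have nz: "0 < norm z" using assms complex_Re_le_cmod[of z] by linarith
  have "Re (inverse z) = Re z / (norm z)\<^sup>2"
    by (simp add: cmod_power2)
  also have "a / b\<^sup>2 \<le> Re z / (norm z)\<^sup>2"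
    using assms nz by (intro frac_le power_mono) auto
  finally show ?thesis by simp
qed

lemma Re_geometric_sum_ge:
  fixes z :: complex
  assumes zr: "norm z \<le> r" and r: "r < 1"
  shows "Re (inverse (1 - z)) - r ^ Suc h / (1 - r) \<le> Re (\<Sum>k\<le>h. z ^ k)"
proof -
  have z1: "z \<noteq> 1" using zr r by auto
  have "(\<Sum>k\<le>h. z ^ k) = (\<Sum>k<Suc h. z ^ k)" by (simp add: lessThan_Suc_atMost)
  also have "\<dots> = (1 - z ^ Suc h) / (1 - z)" using z1 by (simp only: sum_gp_strict if_False)
  finally have "(\<Sum>k\<le>h. z ^ k) = inverse (1 - z) - z ^ Suc h / (1 - z)"
    using z1 by (simp add: field_simps)
  moreover have "Re (z ^ Suc h / (1 - z)) \<le> r ^ Suc h / (1 - r)"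
  proof -
    have "1 - r \<le> norm (1 - z)"
      using norm_triangle_ineq2[of 1 z] zr by (simp add: norm_minus_commute)
    then have "norm z ^ Suc h / norm (1 - z) \<le> r ^ Suc h / (1 - r)"
      using zr r order_trans[OF norm_ge_zero zr] by (intro frac_le power_mono) auto
    moreover have "norm (z ^ Suc h / (1 - z)) = norm z ^ Suc h / norm (1 - z)"
      by (simp only: norm_divide norm_power)
    ultimately show ?thesis using complex_Re_le_cmod[of "z ^ Suc h / (1 - z)"] by linarith
  qed
  ultimately show ?thesis by simp
qed

lemma Re_inverse_one_minus_ge:
  fixes z :: complex
  assumes zr: "norm z \<le> r" and r: "r < 1"
  shows "- (1 / (1 - r)) \<le> Re (inverse (1 - z))"
proof -
  have n1z: "1 - r \<le> norm (1 - z)"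
    using norm_triangle_ineq2[of 1 z] zr by (simp add: norm_minus_commute)
  then have "norm (inverse (1 - z)) \<le> 1 / (1 - r)"
    using r by (simp add: norm_inverse divide_inverse le_imp_inverse_le)
  then show ?thesis using abs_Re_le_cmod[of "inverse (1 - z)"] by linarith
qed

lemma power_le_exp_neg:
  fixes r x :: real
  assumes "0 \<le> r" "r \<le> 1 - x"
  shows "r ^ n \<le> exp (- (x * real n))"
proof -
  have "r \<le> exp (- x)" using assms(2) exp_ge_add_one_self[of "- x"] by simp
  then have "r ^ n \<le> exp (- x) ^ n" using assms(1) by (rule power_mono)
  then show ?thesis by (simp add: exp_of_nat_mult[symmetric] mult.commute)
qed

lemma real_div_le_nat_div_add_1: "0 < m \<Longrightarrow> real (n::nat) / real m \<le> real (n div m) + 1"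
proof -
  assume m: "0 < m"
  have "real n = real m * real (n div m) + real (n mod m)"
    by (metis div_mult_mod_eq of_nat_add of_nat_mult mult.commute)
  moreover have "real (n mod m) < real m" using m by simp
  ultimately have "real n \<le> real m * (real (n div m) + 1)" by (simp add: algebra_simps)
  then show ?thesis using m by (simp add: field_simps)
qed

lemma sum_min_powr_neg_le:
  fixes x a \<beta> :: real
  assumes b: "1 < \<beta>" and J: "1 \<le> J" and x: "0 \<le> x" and a: "0 \<le> a"
  shows "(\<Sum>i\<in>{1..M}. min x (a * real i powr (- \<beta>)))
       \<le> real J * x + a * (real J powr (1 - \<beta>) / (\<beta> - 1))"
proof -
  have "(\<Sum>i\<in>{1..M}. min x (a * real i powr (- \<beta>)))
      \<le> (\<Sum>i\<in>{1..M}. if i \<le> J then x else a * real i powr (- \<beta>))"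
    by (intro sum_mono) auto
  also have "\<dots> = (\<Sum>i\<in>{1..M} \<inter> {i. i \<le> J}. x) + (\<Sum>i\<in>{1..M} \<inter> - {i. i \<le> J}. a * real i powr (- \<beta>))"
    by (rule sum.If_cases) simp
  also have "(\<Sum>i\<in>{1..M} \<inter> {i. i \<le> J}. x) \<le> real J * x"
  proof -
    have "card ({1..M} \<inter> {i. i \<le> J}) \<le> card {1..J}" by (rule card_mono) auto
    then have "real (card ({1..M} \<inter> {i. i \<le> J})) \<le> real J" by simp
    then show ?thesis using x by (simp add: mult_right_mono)
  qed
  also have "{1..M} \<inter> - {i. i \<le> J} = {J<..M}" using J by auto
  also have "(\<Sum>i\<in>{J<..M}. a * real i powr (- \<beta>)) \<le> a * (real J powr (1 - \<beta>) / (\<beta> - 1))"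
    unfolding sum_distrib_left[symmetric] using a by (intro mult_left_mono sum_powr_neg_tail_le b J) auto
  finally show ?thesis by simp
qed

lemma sum_folded_exp_div_le:
  fixes a lam :: real
  assumes lam: "0 < lam" and a: "0 \<le> a"
  shows "(\<Sum>j\<in>{1..N-1}. a / real (min j (N - j)) * exp (- lam * real (min j (N - j))))
       \<le> 2 * (a * (1 / (1 - exp (- lam))))"
proof -
  define T where "T i = a / real i * exp (- lam * real i)" for i :: nat
  have "(\<Sum>j\<in>{1..N-1}. T (min j (N - j))) \<le> 2 * (\<Sum>i\<in>{1..N div 2}. T i)"
    by (rule sum_fold_min_le) (use a in \<open>simp add: T_def\<close>)
  also have "(\<Sum>i\<in>{1..N div 2}. T i) \<le> (\<Sum>i\<in>{1..N div 2}. a * exp (- lam) ^ i)"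
  proof (intro sum_mono)
    fix i assume i: "i \<in> {1..N div 2}"
    have "T i = a * exp (- lam) ^ i / real i"
      unfolding T_def by (simp add: exp_of_nat_mult[symmetric] mult.commute)
    also have "\<dots> \<le> a * exp (- lam) ^ i / 1"
      by (rule divide_left_mono) (use i a in auto)
    finally show "T i \<le> a * exp (- lam) ^ i" by simp
  qed
  also have "\<dots> = a * (\<Sum>i\<in>{1..N div 2}. exp (- lam) ^ i)" by (simp add: sum_distrib_left)
  also have "\<dots> \<le> a * (1 / (1 - exp (- lam)))"
    using lam a by (intro mult_left_mono sum_power_le_inverse) auto
  finally show ?thesis unfolding T_def by simp
qed

lemma sum_folded_harmonic_ge:
  fixes \<kappa> \<delta> :: real
  assumes N: "N \<ge> 2" and d: "0 < \<delta>" and \<kappa>: "0 \<le> \<kappa>"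
  defines "M0 \<equiv> nat \<lceil>2 * pi / \<delta>\<rceil> + 1"
    and "P \<equiv> \<lambda>i::nat. if 2 * pi * real i / real N < \<delta> then \<kappa> * real N / (2 * pi * real i) else 0"
  shows "\<kappa> / (2 * pi) * (ln (real N) - ln (real M0)) * real N \<le> (\<Sum>j\<in>{1..N-1}. P (min j (N - j)))"
proof -
  have Npos: "0 < real N" using N by simp
  have M0: "2 * pi / real M0 < \<delta>" "2 \<le> M0"
  proof -
    have "2 * pi / \<delta> < real M0" unfolding M0_def by linarith
    moreover have "0 < real M0" unfolding M0_def by simp
    ultimately show "2 * pi / real M0 < \<delta>" using d by (simp add: field_simps)
    have "0 < \<lceil>2 * pi / \<delta>\<rceil>" using d by simp
    then show "2 \<le> M0" unfolding M0_def by linarith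
  qed
  define M where "M = N div M0"
  \<comment> \<open>the angles \<open>2\<pi>j/N\<close> with \<open>j \<le> M\<close> all lie in the region where \<open>P\<close> is harmonic\<close>
  have "P j = \<kappa> * real N / (2 * pi) * inverse (real j)" if j: "j \<in> {1..M}" for j
  proof -
    have "real j \<le> real (N div M0)" using j unfolding M_def by simp
    also have "\<dots> \<le> real N / real M0" by (rule of_nat_div_le_of_nat)
    finally have "2 * pi * real j / real N \<le> 2 * pi / real M0"
      using Npos M0 by (simp add: field_simps)
    then have "2 * pi * real j / real N < \<delta>" using M0 by linarith
    then show ?thesis unfolding P_def by (simp add: field_simps)
  qed
  then have "(\<Sum>j\<in>{1..M}. P j) = \<kappa> * real N / (2 * pi) * harm M"
    unfolding harm_def by (simp add: sum_distrib_left)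
  moreover have "ln (real N) - ln (real M0) \<le> harm M"
  proof -
    have "real N / real M0 \<le> real M + 1"
      unfolding M_def using M0(2) by (intro real_div_le_nat_div_add_1) auto
    then have "ln (real N / real M0) \<le> ln (real M + 1)" using Npos M0 by (intro ln_mono) auto
    also have "\<dots> \<le> harm M" by (rule ln_le_harm)
    finally show ?thesis using Npos M0 by (simp add: ln_div)
  qed
  then have "\<kappa> / (2 * pi) * (ln (real N) - ln (real M0)) * real N \<le> \<kappa> / (2 * pi) * harm M * real N"
    using \<kappa> Npos by (intro mult_right_mono mult_left_mono) auto
  moreover have "(\<Sum>j\<in>{1..M}. P j) \<le> (\<Sum>j\<in>{1..N-1}. P (min j (N - j)))"
  proof -
    have MN: "M \<le> N div 2" unfolding M_def using M0(2) by (simp add: div_le_mono2)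
    then have "(\<Sum>j\<in>{1..M}. P j) = (\<Sum>j\<in>{1..M}. P (min j (N - j)))"
      by (intro sum.cong refl) (auto simp: min_def)
    also have "\<dots> \<le> (\<Sum>j\<in>{1..N-1}. P (min j (N - j)))"
      using MN N \<kappa> by (intro sum_mono2) (auto simp: P_def)
    finally show ?thesis .
  qed
  ultimately show ?thesis by (simp add: mult_ac)
qed

lemma le_div_if_le_inverse_affine:
  fixes x G a B L :: real
  assumes a: "0 < a" and B: "0 < B" and L: "0 < L" and G: "a * L - B \<le> G" "0 < G"
    and x: "x \<le> 3 / G" "x \<le> 1"
  shows "x \<le> (6 / a + 2 * B / a) / L"
proof (cases "2 * B \<le> a * L")
  case True
  then have "a * L / 2 \<le> G" using G by linarith
  then have "3 / G \<le> 3 / (a * L / 2)" using a L G(2) by (intro divide_left_mono) auto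
  also have "\<dots> = (6 / a) / L" using a L by (simp add: field_simps)
  also have "\<dots> \<le> (6 / a + 2 * B / a) / L" using a B L by (intro divide_right_mono) auto
  finally show ?thesis using x(1) by simp
next
  case False
  then have "L < 2 * B / a" using a by (simp add: field_simps)
  then have "1 \<le> (2 * B / a) / L" using L by (subst le_divide_eq_1_pos) auto
  also have "\<dots> \<le> (6 / a + 2 * B / a) / L" using a L by (intro divide_right_mono) auto
  finally show ?thesis using x(2) by simp
qed

section \<open>Bounds on the Green function\<close>

lemma green_le:
  fixes d :: "int pmf"
  assumes N: "N \<ge> 1"
  shows "green d N m \<le> 1 + real m / real N
          + (\<Sum>j\<in>{1..N-1}. \<Sum>k\<in>{1..m}. norm (char_fun d (2 * pi * real j / real N)) ^ k) / real N"
proof -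
  define f where "f j k = norm (char_fun d (2 * pi * real j / real N)) ^ k" for j k
  have "green d N m = return_prob d N 0 + (\<Sum>k\<in>{1..m}. return_prob d N k)"
  proof -
    have "{..m} = insert 0 {1..m}" by auto
    then show ?thesis unfolding green_def by simp
  qed
  also have "(\<Sum>k\<in>{1..m}. return_prob d N k) \<le> (\<Sum>k\<in>{1..m}. (1 + (\<Sum>j\<in>{1..N-1}. f j k)) / real N)"
    unfolding f_def by (intro sum_mono return_prob_le[OF N])
  also have "\<dots> = (\<Sum>k\<in>{1..m}. 1 / real N) + (\<Sum>k\<in>{1..m}. (\<Sum>j\<in>{1..N-1}. f j k)) / real N"
    by (simp add: add_divide_distrib sum.distrib sum_divide_distrib)
  also have "(\<Sum>k\<in>{1..m}. (\<Sum>j\<in>{1..N-1}. f j k)) = (\<Sum>j\<in>{1..N-1}. \<Sum>k\<in>{1..m}. f j k)"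
    by (rule sum.swap)
  also have "(\<Sum>k\<in>{1..m}. 1 / real N) = real m / real N" by simp
  finally show ?thesis by (simp add: return_prob_def f_def)
qed

lemma folded_angle:
  assumes "1 \<le> j" "j \<le> N - 1" "N \<ge> 2"
  defines "\<theta>' \<equiv> (if 2 * j \<le> N then 2 * pi * real j / real N else 2 * pi * real j / real N - 2 * pi)"
  shows "\<bar>\<theta>'\<bar> = 2 * pi * real (min j (N - j)) / real N"
    and "\<And>d :: int pmf. char_fun d \<theta>' = char_fun d (2 * pi * real j / real N)"
    and "1 \<le> min j (N - j)" "min j (N - j) \<le> N div 2"
    and "0 < \<bar>\<theta>'\<bar>" "\<bar>\<theta>'\<bar> \<le> pi"
proof -
  show "\<And>d :: int pmf. char_fun d \<theta>' = char_fun d (2 * pi * real j / real N)"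
    unfolding \<theta>'_def by (simp add: char_fun_minus_2pi)
  show "1 \<le> min j (N - j)" "min j (N - j) \<le> N div 2" using assms(1-3) by auto
  show "\<bar>\<theta>'\<bar> = 2 * pi * real (min j (N - j)) / real N"
  proof (cases "2 * j \<le> N")
    case True then show ?thesis unfolding \<theta>'_def by (simp add: min_def)
  next
    case False
    then have jN: "j < N" "N - j < j" using assms by auto
    have "\<bar>2 * pi * real j / real N - 2 * pi\<bar> = 2 * pi - 2 * pi * real j / real N"
      using jN by (simp add: field_simps)
    also have "\<dots> = 2 * pi * real (N - j) / real N" using jN by (simp add: of_nat_diff field_simps)
    finally show ?thesis using False jN unfolding \<theta>'_def by (simp add: min_def)
  qed
  moreover have "2 * pi * real (min j (N - j)) / real N \<le> pi"
  proof -
    have "2 * real (min j (N - j)) \<le> real N" using assms(1-3) by linarith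
    then show ?thesis using assms(3) by (simp add: field_simps)
  qed
  ultimately show "0 < \<bar>\<theta>'\<bar>" "\<bar>\<theta>'\<bar> \<le> pi" using assms(1-3) by auto
qed

lemma green_le_avg_sum:
  fixes p q :: "int pmf" and E :: "nat \<Rightarrow> real"
  assumes N: "N \<ge> 2"
    and E: "\<And>i \<theta>. 1 \<le> i \<Longrightarrow> i \<le> N div 2 \<Longrightarrow> \<bar>\<theta>\<bar> = 2 * pi * real i / real N \<Longrightarrow>
               0 < \<bar>\<theta>\<bar> \<Longrightarrow> \<bar>\<theta>\<bar> \<le> pi \<Longrightarrow> (\<Sum>k\<in>{1..N-1}. norm (char_fun p \<theta>) ^ k) \<le> E i"
    and E0: "\<And>i. 0 \<le> E i"
  shows "green (diff_pmf p q) N (N - 1) \<le> 2 + 2 / real N * (\<Sum>i\<in>{1..N div 2}. E i)"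
proof -
  let ?w = "diff_pmf p q"
  have N1: "N \<ge> 1" using N by simp
  have per: "(\<Sum>k\<in>{1..N-1}. norm (char_fun ?w (2 * pi * real j / real N)) ^ k) \<le> E (min j (N - j))"
    if j: "j \<in> {1..N-1}" for j
  proof -
    define \<theta>' where "\<theta>' = (if 2 * j \<le> N then 2 * pi * real j / real N else 2 * pi * real j / real N - 2 * pi)"
    have fa: "\<bar>\<theta>'\<bar> = 2 * pi * real (min j (N - j)) / real N"
      "\<And>d :: int pmf. char_fun d \<theta>' = char_fun d (2 * pi * real j / real N)"
      "1 \<le> min j (N - j)" "min j (N - j) \<le> N div 2" "0 < \<bar>\<theta>'\<bar>" "\<bar>\<theta>'\<bar> \<le> pi"
      using folded_angle[of j N] j N unfolding \<theta>'_def by auto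
    have "(\<Sum>k\<in>{1..N-1}. norm (char_fun ?w (2 * pi * real j / real N)) ^ k)
        \<le> (\<Sum>k\<in>{1..N-1}. norm (char_fun p \<theta>') ^ k)"
      unfolding fa(2)[symmetric]
      by (intro sum_mono power_mono norm_char_fun_diff_pmf_le) auto
    also have "\<dots> \<le> E (min j (N - j))" by (rule E[OF fa(3) fa(4) fa(1) fa(5) fa(6)])
    finally show ?thesis .
  qed
  have "green ?w N (N - 1) \<le> 1 + real (N - 1) / real N
      + (\<Sum>j\<in>{1..N-1}. \<Sum>k\<in>{1..N-1}. norm (char_fun ?w (2 * pi * real j / real N)) ^ k) / real N"
    by (rule green_le[OF N1])
  also have "real (N - 1) / real N \<le> 1" using N by simp
  also have "(\<Sum>j\<in>{1..N-1}. \<Sum>k\<in>{1..N-1}. norm (char_fun ?w (2 * pi * real j / real N)) ^ k)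
      \<le> (\<Sum>j\<in>{1..N-1}. E (min j (N - j)))"
    by (intro sum_mono per)
  also have "\<dots> \<le> 2 * (\<Sum>i\<in>{1..N div 2}. E i)" by (rule sum_fold_min_le[OF E0])
  finally show ?thesis using N by (simp add: divide_right_mono field_simps)
qed

lemma sum_power_char_fun_le:
  fixes p :: "int pmf"
  assumes c: "0 < c" and b: "0 < \<beta>" and d: "0 < \<delta>" and eta: "0 < \<eta>"
    and small: "\<forall>\<theta>. \<theta> \<noteq> 0 \<and> \<bar>\<theta>\<bar> < \<delta> \<longrightarrow> norm (char_fun p \<theta>) \<le> 1 - c / 2 * \<bar>\<theta>\<bar> powr \<beta>"
    and large: "\<forall>\<theta>. \<delta> \<le> \<bar>\<theta>\<bar> \<and> \<bar>\<theta>\<bar> \<le> pi \<longrightarrow> norm (char_fun p \<theta>) \<le> 1 - \<eta>"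
    and th: "0 < \<bar>\<theta>\<bar>" "\<bar>\<theta>\<bar> \<le> pi"
  shows "(\<Sum>k\<in>{1..m}. norm (char_fun p \<theta>) ^ k) \<le> 2 / c * \<bar>\<theta>\<bar> powr (- \<beta>) + 1 / \<eta>"
proof (cases "\<bar>\<theta>\<bar> < \<delta>")
  case True
  define r where "r = norm (char_fun p \<theta>)"
  have tb: "0 < \<bar>\<theta>\<bar> powr \<beta>" using th by simp
  have r: "r \<le> 1 - c / 2 * \<bar>\<theta>\<bar> powr \<beta>" using small True th unfolding r_def by auto
  have "0 < c / 2 * \<bar>\<theta>\<bar> powr \<beta>" using c tb by simp
  then have r1: "r < 1" using r by linarith
  have "(\<Sum>k\<in>{1..m}. r ^ k) \<le> 1 / (1 - r)" by (rule sum_power_le_inverse) (use r1 r_def in auto)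
  also have "\<dots> \<le> 1 / (c / 2 * \<bar>\<theta>\<bar> powr \<beta>)"
    using r c tb r1 by (intro divide_left_mono mult_pos_pos) auto
  also have "\<dots> = 2 / c * \<bar>\<theta>\<bar> powr (- \<beta>)" by (simp add: powr_minus field_simps)
  finally have "(\<Sum>k\<in>{1..m}. r ^ k) \<le> 2 / c * \<bar>\<theta>\<bar> powr (- \<beta>)" .
  moreover have "0 < 1 / \<eta>" using eta by simp
  ultimately show ?thesis unfolding r_def by linarith
next
  case False
  define r where "r = norm (char_fun p \<theta>)"
  have r: "r \<le> 1 - \<eta>" using large False th unfolding r_def by auto
  have "(\<Sum>k\<in>{1..m}. r ^ k) \<le> 1 / (1 - r)" by (rule sum_power_le_inverse) (use r eta r_def in auto)
  also have "\<dots> \<le> 1 / \<eta>" using r eta by (intro divide_left_mono) auto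
  finally have "(\<Sum>k\<in>{1..m}. r ^ k) \<le> 1 / \<eta>" .
  moreover have "0 \<le> 2 / c * \<bar>\<theta>\<bar> powr (- \<beta>)" using c by simp
  ultimately show ?thesis unfolding r_def by linarith
qed

lemma sum_power_char_fun_le_eq1:
  fixes p :: "int pmf"
  assumes c: "0 < c" and d: "0 < \<delta>" and eta: "0 < \<eta>" and C: "0 < C" and e: "0 < \<epsilon>"
    and small: "\<forall>\<theta>. \<theta> \<noteq> 0 \<and> \<bar>\<theta>\<bar> < \<delta> \<longrightarrow> norm (char_fun p \<theta>) \<le> 1 - c * \<bar>\<theta>\<bar> + C * \<bar>\<theta>\<bar> powr (1 + \<epsilon>)
              \<and> C * \<bar>\<theta>\<bar> powr \<epsilon> \<le> c / 2"
    and large: "\<forall>\<theta>. \<delta> \<le> \<bar>\<theta>\<bar> \<and> \<bar>\<theta>\<bar> \<le> pi \<longrightarrow> norm (char_fun p \<theta>) \<le> 1 - \<eta>"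
    and th: "0 < \<bar>\<theta>\<bar>" "\<bar>\<theta>\<bar> \<le> pi"
  shows "(\<Sum>k\<in>{1..m}. norm (char_fun p \<theta>) ^ k) \<le> 1 / (c * \<bar>\<theta>\<bar>) + 2 * C / c\<^sup>2 * \<bar>\<theta>\<bar> powr (- (1 - \<epsilon>)) + 1 / \<eta>"
proof -
  define t where "t = \<bar>\<theta>\<bar>"
  define r where "r = norm (char_fun p \<theta>)"
  have t: "0 < t" "t \<le> pi" using th by (auto simp: t_def)
  have nn: "0 \<le> 1 / (c * t)" "0 \<le> 2 * C / c\<^sup>2 * t powr (- (1 - \<epsilon>))" "0 \<le> 1 / \<eta>"
    using c t C eta by auto
  show ?thesis
  proof (cases "t < \<delta>")
    case True
    define u where "u = C * t powr \<epsilon>"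
    have sm: "r \<le> 1 - c * t + C * t powr (1 + \<epsilon>)" "u \<le> c / 2"
      using small True th unfolding r_def t_def u_def by auto
    have u0: "0 \<le> u" using C by (simp add: u_def)
    have tp: "C * t powr (1 + \<epsilon>) = t * u" using t by (simp add: u_def powr_add)
    have lb: "t * (c - u) \<le> 1 - r" using sm tp by (simp add: algebra_simps)
    have pos: "0 < t * (c - u)" using t sm c by simp
    have "(\<Sum>k\<in>{1..m}. r ^ k) \<le> 1 / (1 - r)" by (rule sum_power_le_inverse) (use r_def lb pos in auto)
    also have "\<dots> \<le> 1 / (t * (c - u))" using lb pos by (intro divide_left_mono) auto
    also have "1 / (t * (c - u)) = 1 / (c * t) + u / (t * c * (c - u))"
      using t c sm by (simp add: field_simps)
    also have "u / (t * c * (c - u)) \<le> u / (t * c * (c / 2))"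
      using t c sm u0 by (intro divide_left_mono mult_left_mono mult_pos_pos) auto
    also have "u / (t * c * (c / 2)) = 2 * C / c\<^sup>2 * t powr (- (1 - \<epsilon>))"
      using t c by (simp add: u_def powr_diff power2_eq_square field_simps powr_minus)
    finally show ?thesis unfolding r_def t_def using nn(3) t_def by linarith
  next
    case False
    have r: "r \<le> 1 - \<eta>" using large False th unfolding r_def t_def by auto
    have "(\<Sum>k\<in>{1..m}. r ^ k) \<le> 1 / (1 - r)" by (rule sum_power_le_inverse) (use r eta r_def in auto)
    also have "\<dots> \<le> 1 / \<eta>" using r eta by (intro divide_left_mono) auto
    finally have "(\<Sum>k\<in>{1..m}. r ^ k) \<le> 1 / \<eta>" .
    then show ?thesis using nn unfolding r_def t_def by linarith
  qed
qed

lemma avg_sum_angle_le_lt1: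
  assumes b: "0 < \<beta>" "\<beta> < 1" and N: "N \<ge> 2" and c: "0 < c" and eta: "0 < \<eta>"
  shows "2 / real N * (\<Sum>i\<in>{1..N div 2}. 2 / c * \<bar>2 * pi * real i / real N\<bar> powr (- \<beta>) + 1 / \<eta>)
          \<le> 4 / c * (2 * pi) powr (- \<beta>) / (1 - \<beta>) + 1 / \<eta>"
proof -
  let ?M = "N div 2"
  have Npos: "0 < real N" using N by simp
  have "(\<Sum>i\<in>{1..?M}. real i powr (- \<beta>)) \<le> real ?M powr (1 - \<beta>) / (1 - \<beta>)"
    by (rule sum_powr_neg_le) (use b in auto)
  also have "\<dots> \<le> real N powr (1 - \<beta>) / (1 - \<beta>)"
    using b by (intro divide_right_mono powr_mono2) auto
  finally have S: "(\<Sum>i\<in>{1..?M}. real i powr (- \<beta>)) \<le> real N powr (1 - \<beta>) / (1 - \<beta>)" .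
  have "(\<Sum>i\<in>{1..?M}. 2 / c * \<bar>2 * pi * real i / real N\<bar> powr (- \<beta>) + 1 / \<eta>)
      = (\<Sum>i\<in>{1..?M}. 2 / c * ((2 * pi) powr (- \<beta>) * real N powr \<beta> * real i powr (- \<beta>)) + 1 / \<eta>)"
    by (intro sum.cong refl) (simp only: abs_angle_powr[OF Npos])
  also have "\<dots> = 2 / c * (2 * pi) powr (- \<beta>) * real N powr \<beta> * (\<Sum>i\<in>{1..?M}. real i powr (- \<beta>)) + real ?M / \<eta>"
    by (simp add: sum.distrib sum_distrib_left mult.assoc)
  also have "\<dots> \<le> 2 / c * (2 * pi) powr (- \<beta>) * real N powr \<beta> * (real N powr (1 - \<beta>) / (1 - \<beta>)) + real N / 2 / \<eta>"
  proof (intro add_mono mult_left_mono S divide_right_mono)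
    show "real ?M \<le> real N / 2" by linarith
  qed (use c eta in auto)
  also have "\<dots> = 2 / c * (2 * pi) powr (- \<beta>) * (real N / (1 - \<beta>)) + real N / 2 / \<eta>"
  proof -
    have "real N powr \<beta> * (real N powr (1 - \<beta>) / (1 - \<beta>)) = real N / (1 - \<beta>)"
      using Npos by (simp add: powr_add[symmetric])
    then show ?thesis by (simp add: mult.assoc)
  qed
  finally have "(\<Sum>i\<in>{1..?M}. 2 / c * \<bar>2 * pi * real i / real N\<bar> powr (- \<beta>) + 1 / \<eta>)
      \<le> 2 / c * (2 * pi) powr (- \<beta>) * (real N / (1 - \<beta>)) + real N / 2 / \<eta>" .
  then have "2 / real N * (\<Sum>i\<in>{1..?M}. 2 / c * \<bar>2 * pi * real i / real N\<bar> powr (- \<beta>) + 1 / \<eta>)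
      \<le> 2 / real N * (2 / c * (2 * pi) powr (- \<beta>) * (real N / (1 - \<beta>)) + real N / 2 / \<eta>)"
    using Npos by (intro mult_left_mono) auto
  also have "\<dots> = 4 / c * (2 * pi) powr (- \<beta>) / (1 - \<beta>) + 1 / \<eta>"
    using Npos b by (simp add: field_simps)
  finally show ?thesis .
qed

lemma avg_sum_angle_le_gt1:
  assumes b: "1 < \<beta>" and N: "N \<ge> 2" and c: "0 < c" and eta: "0 < \<eta>"
  defines "A \<equiv> 2 / c * (2 * pi) powr (- \<beta>)"
  shows "2 / real N * (\<Sum>i\<in>{1..N div 2}. min (real N) (2 / c * \<bar>2 * pi * real i / real N\<bar> powr (- \<beta>)) + 1 / \<eta>)
          \<le> (4 + 2 * A / (\<beta> - 1) + 1 / \<eta>) * real N powr ((\<beta> - 1) / \<beta>)"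
proof -
  let ?M = "N div 2"
  define \<gamma> where "\<gamma> = (\<beta> - 1) / \<beta>"
  have Npos: "0 < real N" using N by simp
  have g: "0 < \<gamma>" using b by (simp add: \<gamma>_def)
  have Ng1: "1 \<le> real N powr \<gamma>" using N g by (simp add: ge_one_powr_ge_zero)
  define J where "J = nat \<lceil>real N powr \<gamma>\<rceil>"
  have J1: "real N powr \<gamma> \<le> real J" unfolding J_def by linarith
  have J2: "real J \<le> 2 * real N powr \<gamma>" unfolding J_def using Ng1 by linarith
  have J0: "1 \<le> J" using J1 Ng1 by linarith
  have A0: "0 < A" using c by (simp add: A_def)
  have "(\<Sum>i\<in>{1..?M}. min (real N) (2 / c * \<bar>2 * pi * real i / real N\<bar> powr (- \<beta>)))
      = (\<Sum>i\<in>{1..?M}. min (real N) (A * real N powr \<beta> * real i powr (- \<beta>)))"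
    using abs_angle_powr[OF Npos] by (simp add: A_def mult.assoc)
  also have "\<dots> \<le> real J * real N + A * real N powr \<beta> * (real J powr (1 - \<beta>) / (\<beta> - 1))"
    using A0 by (intro sum_min_powr_neg_le b J0) auto
  finally have S: "(\<Sum>i\<in>{1..?M}. min (real N) (2 / c * \<bar>2 * pi * real i / real N\<bar> powr (- \<beta>)))
      \<le> real J * real N + A * real N powr \<beta> * (real J powr (1 - \<beta>) / (\<beta> - 1))" .
  have Jp: "real J powr (1 - \<beta>) \<le> (real N powr \<gamma>) powr (1 - \<beta>)"
    using J1 b Ng1 N by (intro powr_mono2') auto
  have ex: "\<beta> - 1 + \<gamma> * (1 - \<beta>) = \<gamma>" using b unfolding \<gamma>_def by (simp add: field_simps)
  have "2 / real N * (A * real N powr \<beta> * (real J powr (1 - \<beta>) / (\<beta> - 1)))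
      = 2 * A / (\<beta> - 1) * (real N powr (\<beta> - 1) * real J powr (1 - \<beta>))"
    using Npos by (simp add: powr_diff field_simps)
  also have "\<dots> \<le> 2 * A / (\<beta> - 1) * (real N powr (\<beta> - 1) * (real N powr \<gamma>) powr (1 - \<beta>))"
    using A0 b Jp by (intro mult_left_mono) auto
  also have "real N powr (\<beta> - 1) * (real N powr \<gamma>) powr (1 - \<beta>) = real N powr \<gamma>"
    using Npos ex by (simp add: powr_powr powr_add[symmetric])
  finally have T2: "2 / real N * (A * real N powr \<beta> * (real J powr (1 - \<beta>) / (\<beta> - 1))) \<le> 2 * A / (\<beta> - 1) * real N powr \<gamma>" .
  have T1: "2 / real N * (real J * real N) \<le> 4 * real N powr \<gamma>" using J2 Npos by simp
  have T3: "2 / real N * (real ?M / \<eta>) \<le> 1 / \<eta> * real N powr \<gamma>"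
  proof -
    have "2 / real N * (real ?M / \<eta>) \<le> 1 / \<eta>"
      using Npos eta by (simp add: field_simps)
    also have "\<dots> \<le> 1 / \<eta> * real N powr \<gamma>" using Ng1 eta by (simp add: divide_right_mono)
    finally show ?thesis .
  qed
  define Smin where "Smin = (\<Sum>i\<in>{1..?M}. min (real N) (2 / c * \<bar>2 * pi * real i / real N\<bar> powr (- \<beta>)))"
  have E1: "2 / real N * (\<Sum>i\<in>{1..?M}. min (real N) (2 / c * \<bar>2 * pi * real i / real N\<bar> powr (- \<beta>)) + 1 / \<eta>)
      = 2 / real N * Smin + 2 / real N * (real ?M / \<eta>)"
    unfolding Smin_def by (simp add: sum.distrib distrib_left)
  have E2: "2 / real N * Smin \<le> 2 / real N * (real J * real N + A * real N powr \<beta> * (real J powr (1 - \<beta>) / (\<beta> - 1)))"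
    using S Npos unfolding Smin_def by (intro mult_left_mono) auto
  have E3: "2 / real N * (real J * real N + A * real N powr \<beta> * (real J powr (1 - \<beta>) / (\<beta> - 1)))
     = 2 / real N * (real J * real N) + 2 / real N * (A * real N powr \<beta> * (real J powr (1 - \<beta>) / (\<beta> - 1)))"
    by (simp only: distrib_left)
  have "2 / real N * (\<Sum>i\<in>{1..?M}. min (real N) (2 / c * \<bar>2 * pi * real i / real N\<bar> powr (- \<beta>)) + 1 / \<eta>)
      \<le> 4 * real N powr \<gamma> + 2 * A / (\<beta> - 1) * real N powr \<gamma> + 1 / \<eta> * real N powr \<gamma>"
    using E1 E2 E3 T1 T2 T3 by linarith
  then show ?thesis unfolding \<gamma>_def by (simp add: algebra_simps)
qed

lemma avg_sum_angle_le_eq1: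
  assumes N: "N \<ge> 2" and c: "0 < c" and eta: "0 < \<eta>" and C: "0 < C" and e: "0 < \<epsilon>" "\<epsilon> < 1"
  shows "2 / real N * (\<Sum>i\<in>{1..N div 2}. 1 / (c * \<bar>2 * pi * real i / real N\<bar>)
            + 2 * C / c\<^sup>2 * \<bar>2 * pi * real i / real N\<bar> powr (- (1 - \<epsilon>)) + 1 / \<eta>)
         \<le> ln (real N) / (c * pi) + (1 / (c * pi) + 2 * (2 * C / c\<^sup>2) * (2 * pi) powr (- (1 - \<epsilon>)) / \<epsilon> + 1 / \<eta>)"
proof -
  let ?M = "N div 2"
  define K where "K = 2 * C / c\<^sup>2"
  have K0: "0 < K" using C c by (simp add: K_def)
  have Npos: "0 < real N" using N by simp
  have M1: "1 \<le> ?M" using N by simp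
  have a1: "1 / (c * \<bar>2 * pi * real i / real N\<bar>) = real N / (2 * pi * c) * inverse (real i)" if "1 \<le> i" for i
    using that Npos c by (simp add: field_simps)
  have "(\<Sum>i\<in>{1..?M}. 1 / (c * \<bar>2 * pi * real i / real N\<bar>)) = real N / (2 * pi * c) * harm ?M"
  proof -
    have "(\<Sum>i\<in>{1..?M}. 1 / (c * \<bar>2 * pi * real i / real N\<bar>)) = (\<Sum>i\<in>{1..?M}. real N / (2 * pi * c) * inverse (real i))"
      by (intro sum.cong refl a1) auto
    then show ?thesis unfolding harm_def by (simp only: sum_distrib_left)
  qed
  then have A: "2 / real N * (\<Sum>i\<in>{1..?M}. 1 / (c * \<bar>2 * pi * real i / real N\<bar>)) = harm ?M / (pi * c)"
    using Npos by (simp add: field_simps)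
  have "harm ?M \<le> ln (real ?M) + (1::real)" by (rule harm_le_ln_add_1[OF M1])
  also have "ln (real ?M) \<le> ln (real N)" using M1 by (intro ln_mono) auto
  finally have A': "2 / real N * (\<Sum>i\<in>{1..?M}. 1 / (c * \<bar>2 * pi * real i / real N\<bar>)) \<le> (ln (real N) + 1) / (pi * c)"
    unfolding A using c by (intro divide_right_mono) auto
  have "(\<Sum>i\<in>{1..?M}. real i powr (- (1 - \<epsilon>))) \<le> real ?M powr (1 - (1 - \<epsilon>)) / (1 - (1 - \<epsilon>))"
    by (rule sum_powr_neg_le) (use e in auto)
  also have "\<dots> = real ?M powr \<epsilon> / \<epsilon>" by simp
  also have "\<dots> \<le> real N powr \<epsilon> / \<epsilon>" using e by (intro divide_right_mono powr_mono2) auto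
  finally have Ssum: "(\<Sum>i\<in>{1..?M}. real i powr (- (1 - \<epsilon>))) \<le> real N powr \<epsilon> / \<epsilon>" .
  have "(\<Sum>i\<in>{1..?M}. K * \<bar>2 * pi * real i / real N\<bar> powr (- (1 - \<epsilon>)))
      = (\<Sum>i\<in>{1..?M}. K * ((2 * pi) powr (- (1 - \<epsilon>)) * real N powr (1 - \<epsilon>) * real i powr (- (1 - \<epsilon>))))"
    by (intro sum.cong refl) (simp only: abs_angle_powr[OF Npos])
  also have "\<dots> = K * (2 * pi) powr (- (1 - \<epsilon>)) * real N powr (1 - \<epsilon>) * (\<Sum>i\<in>{1..?M}. real i powr (- (1 - \<epsilon>)))"
    by (simp add: sum_distrib_left mult.assoc)
  also have "\<dots> \<le> K * (2 * pi) powr (- (1 - \<epsilon>)) * real N powr (1 - \<epsilon>) * (real N powr \<epsilon> / \<epsilon>)"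
    using K0 by (intro mult_left_mono Ssum) auto
  also have "\<dots> = K * (2 * pi) powr (- (1 - \<epsilon>)) * real N / \<epsilon>"
    using Npos by (simp add: mult.assoc powr_add[symmetric])
  finally have B0: "(\<Sum>i\<in>{1..?M}. K * \<bar>2 * pi * real i / real N\<bar> powr (- (1 - \<epsilon>)))
      \<le> K * (2 * pi) powr (- (1 - \<epsilon>)) * real N / \<epsilon>" .
  have B: "2 / real N * (\<Sum>i\<in>{1..?M}. K * \<bar>2 * pi * real i / real N\<bar> powr (- (1 - \<epsilon>)))
      \<le> 2 * K * (2 * pi) powr (- (1 - \<epsilon>)) / \<epsilon>"
  proof -
    have "2 / real N * (\<Sum>i\<in>{1..?M}. K * \<bar>2 * pi * real i / real N\<bar> powr (- (1 - \<epsilon>)))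
        \<le> 2 / real N * (K * (2 * pi) powr (- (1 - \<epsilon>)) * real N / \<epsilon>)"
      using Npos by (intro mult_left_mono B0) auto
    also have "\<dots> = 2 * K * (2 * pi) powr (- (1 - \<epsilon>)) / \<epsilon>" using Npos by (simp add: field_simps)
    finally show ?thesis .
  qed
  have Cc: "2 / real N * (\<Sum>i\<in>{1..?M}. 1 / \<eta>) \<le> 1 / \<eta>"
    using Npos eta by (simp add: field_simps)
  have split: "2 / real N * (\<Sum>i\<in>{1..?M}. 1 / (c * \<bar>2 * pi * real i / real N\<bar>)
            + K * \<bar>2 * pi * real i / real N\<bar> powr (- (1 - \<epsilon>)) + 1 / \<eta>)
      = 2 / real N * (\<Sum>i\<in>{1..?M}. 1 / (c * \<bar>2 * pi * real i / real N\<bar>))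
        + 2 / real N * (\<Sum>i\<in>{1..?M}. K * \<bar>2 * pi * real i / real N\<bar> powr (- (1 - \<epsilon>)))
        + 2 / real N * (\<Sum>i\<in>{1..?M}. 1 / \<eta>)"
    by (simp only: sum.distrib distrib_left)
  have "(ln (real N) + 1) / (pi * c) = ln (real N) / (c * pi) + 1 / (c * pi)"
    by (simp add: add_divide_distrib mult.commute)
  then show ?thesis using split A' B Cc unfolding K_def by linarith
qed

lemma Re_sum_power_char_fun_diff_ge:
  fixes p q :: "int pmf"
  assumes c: "0 < c" and d: "0 < \<delta>" "\<delta> \<le> 1" and eta: "0 < \<eta>" and C: "0 \<le> C" and e: "0 < \<epsilon>"
    and Y: "set_pmf q \<subseteq> {-1, 0, 1}"
    and small: "\<forall>\<theta>. \<theta> \<noteq> 0 \<and> \<bar>\<theta>\<bar> < \<delta> \<longrightarrow> norm (char_fun p \<theta>) \<le> 1 - c / 2 * \<bar>\<theta>\<bar>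
              \<and> norm (1 - char_fun p \<theta>) \<le> c * \<bar>\<theta>\<bar> + C * \<bar>\<theta>\<bar> powr (1 + \<epsilon>)"
    and large: "\<forall>\<theta>. \<delta> \<le> \<bar>\<theta>\<bar> \<and> \<bar>\<theta>\<bar> \<le> pi \<longrightarrow> norm (char_fun p \<theta>) \<le> 1 - \<eta>"
    and th: "0 < \<bar>\<theta>\<bar>" "\<bar>\<theta>\<bar> \<le> pi"
  shows "(if \<bar>\<theta>\<bar> < \<delta> then c / (2 * (c + C + 1)\<^sup>2) / \<bar>\<theta>\<bar> else 0)
           - 2 / (c * \<bar>\<theta>\<bar>) * exp (- (c / 2 * \<bar>\<theta>\<bar> * real (Suc h))) - 2 / \<eta>
         \<le> Re (\<Sum>k\<le>h. char_fun (diff_pmf p q) \<theta> ^ k)"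
proof -
  define z where "z = char_fun (diff_pmf p q) \<theta>"
  define r where "r = norm (char_fun p \<theta>)"
  define t where "t = \<bar>\<theta>\<bar>"
  have t: "0 < t" "t \<le> pi" using th t_def by auto
  have zr: "norm z \<le> r" unfolding z_def r_def by (rule norm_char_fun_diff_pmf_le)
  have r0: "0 \<le> r" by (simp add: r_def)
  show ?thesis
  proof (cases "t < \<delta>")
    case True
    have sm: "r \<le> 1 - c / 2 * t" "norm (1 - char_fun p \<theta>) \<le> c * t + C * t powr (1 + \<epsilon>)"
      using small True t unfolding r_def t_def by auto
    have r1: "r < 1" using sm(1) c t by (smt (verit) divide_pos_pos mult_pos_pos zero_less_numeral)
    have "t powr (1 + \<epsilon>) \<le> t" using t True d e powr_mono'[of 1 "1 + \<epsilon>" t] by simp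
    then have nphi: "norm (1 - char_fun p \<theta>) \<le> (c + C) * t"
      using sm(2) C by (simp add: distrib_right) (meson mult_left_mono order_trans add_left_mono)
    have chi: "norm (1 - char_fun q (- \<theta>)) \<le> t" using norm_one_minus_char_fun_le[OF Y, of "- \<theta>"] t_def by simp
    have "1 - z = (1 - char_fun p \<theta>) + char_fun p \<theta> * (1 - char_fun q (- \<theta>))"
      by (simp add: z_def char_fun_diff_pmf algebra_simps)
    then have "norm (1 - z) \<le> norm (1 - char_fun p \<theta>) + norm (char_fun p \<theta>) * norm (1 - char_fun q (- \<theta>))"
      by (metis norm_mult norm_triangle_ineq)
    also have "\<dots> \<le> (c + C) * t + 1 * t"
      using nphi chi norm_char_fun_le_1[of p \<theta>] by (intro add_mono mult_mono) auto
    finally have n1: "norm (1 - z) \<le> (c + C + 1) * t" by (simp add: algebra_simps)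
    have re1: "c / 2 * t \<le> Re (1 - z)"
      using complex_Re_le_cmod[of z] zr sm(1) by simp
    have "c / 2 * t / ((c + C + 1) * t)\<^sup>2 \<le> Re (inverse (1 - z))"
      by (rule Re_inverse_ge[OF re1 _ n1]) (use c t in simp)
    moreover have "c / 2 * t / ((c + C + 1) * t)\<^sup>2 = c / (2 * (c + C + 1)\<^sup>2) / t"
    proof -
      have "a / 2 * t / (K * t)\<^sup>2 = a / (2 * K\<^sup>2) / t" if "0 < K" for a K :: real
        using that t(1) by (simp add: power2_eq_square field_simps)
      then show ?thesis using c C by simp
    qed
    ultimately have A: "c / (2 * (c + C + 1)\<^sup>2) / t \<le> Re (inverse (1 - z))" by simp
    have B: "r ^ Suc h / (1 - r) \<le> 2 / (c * t) * exp (- (c / 2 * t * real (Suc h)))"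
    proof -
      have "r ^ Suc h / (1 - r) \<le> exp (- (c / 2 * t * real (Suc h))) / (c / 2 * t)"
        using power_le_exp_neg[OF r0 sm(1), of "Suc h"] sm(1) c t by (intro frac_le) (auto simp: mult_ac)
      then show ?thesis by (simp add: field_simps)
    qed
    have "0 < 2 / \<eta>" using eta by simp
    moreover have "(if \<bar>\<theta>\<bar> < \<delta> then c / (2 * (c + C + 1)\<^sup>2) / \<bar>\<theta>\<bar> else 0) = c / (2 * (c + C + 1)\<^sup>2) / \<bar>\<theta>\<bar>"
      using True t_def by simp
    ultimately show ?thesis using Re_geometric_sum_ge[OF zr r1, of h] A B unfolding z_def t_def by linarith
  next
    case False
    then have r: "r \<le> 1 - \<eta>" using large t unfolding r_def t_def by auto
    then have r1: "r < 1" using eta by simp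
    have "1 / (1 - r) \<le> 1 / \<eta>" using r eta by (intro divide_left_mono) auto
    moreover have "r ^ Suc h / (1 - r) \<le> 1 / (1 - r)"
      using r0 r1 by (intro divide_right_mono power_le_one) auto
    moreover have "0 \<le> 2 / (c * t) * exp (- (c / 2 * t * real (Suc h)))" using c t by simp
    ultimately show ?thesis
      using Re_geometric_sum_ge[OF zr r1, of h] Re_inverse_one_minus_ge[OF zr r1] False
      unfolding z_def t_def by simp
  qed
qed

lemma green_ge_log:
  fixes p q :: "int pmf"
  assumes c: "0 < c" and d: "0 < \<delta>" "\<delta> \<le> 1" and eta: "0 < \<eta>" and C: "0 \<le> C" and e: "0 < \<epsilon>"
    and Y: "set_pmf q \<subseteq> {-1, 0, 1}"
    and small: "\<forall>\<theta>. \<theta> \<noteq> 0 \<and> \<bar>\<theta>\<bar> < \<delta> \<longrightarrow> norm (char_fun p \<theta>) \<le> 1 - c / 2 * \<bar>\<theta>\<bar>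
              \<and> norm (1 - char_fun p \<theta>) \<le> c * \<bar>\<theta>\<bar> + C * \<bar>\<theta>\<bar> powr (1 + \<epsilon>)"
    and large: "\<forall>\<theta>. \<delta> \<le> \<bar>\<theta>\<bar> \<and> \<bar>\<theta>\<bar> \<le> pi \<longrightarrow> norm (char_fun p \<theta>) \<le> 1 - \<eta>"
    and N: "N \<ge> 2" and h: "real N \<le> 2 * real (Suc h)"
  defines "\<kappa> \<equiv> c / (2 * (c + C + 1)\<^sup>2)" and "M0 \<equiv> nat \<lceil>2 * pi / \<delta>\<rceil> + 1"
  shows "\<kappa> / (2 * pi) * ln (real N) - (\<kappa> / (2 * pi) * ln (real M0) + 2 / (c * pi * (1 - exp (- (c * pi / 2)))) + 2 / \<eta>)
         \<le> green (diff_pmf p q) N h"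
proof -
  let ?w = "diff_pmf p q"
  define lam where "lam = c * pi / 2"
  have lam: "0 < lam" using c by (simp add: lam_def)
  have Npos: "0 < real N" using N by simp
  have N1: "N \<ge> 1" using N by simp
  define P where "P i = (if 2 * pi * real i / real N < \<delta> then \<kappa> * real N / (2 * pi * real i) else 0)" for i :: nat
  define T where "T i = real N / (c * pi * real i) * exp (- lam * real i)" for i :: nat
  have per: "P (min j (N - j)) - T (min j (N - j)) - 2 / \<eta>
      \<le> Re (\<Sum>k\<le>h. char_fun ?w (2 * pi * real j / real N) ^ k)" if j: "j \<in> {1..N-1}" for j
  proof -
    define \<theta>' where "\<theta>' = (if 2 * j \<le> N then 2 * pi * real j / real N else 2 * pi * real j / real N - 2 * pi)"
    define i where "i = min j (N - j)"
    have fa: "\<bar>\<theta>'\<bar> = 2 * pi * real i / real N"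
      "\<And>d :: int pmf. char_fun d \<theta>' = char_fun d (2 * pi * real j / real N)"
      "1 \<le> i" "i \<le> N div 2" and tpos: "0 < \<bar>\<theta>'\<bar>" and tpi: "\<bar>\<theta>'\<bar> \<le> pi"
      using folded_angle[of j N] j N unfolding \<theta>'_def i_def by auto
    have U: "(if \<bar>\<theta>'\<bar> < \<delta> then \<kappa> / \<bar>\<theta>'\<bar> else 0)
           - 2 / (c * \<bar>\<theta>'\<bar>) * exp (- (c / 2 * \<bar>\<theta>'\<bar> * real (Suc h))) - 2 / \<eta>
         \<le> Re (\<Sum>k\<le>h. char_fun ?w \<theta>' ^ k)"
      unfolding \<kappa>_def by (rule Re_sum_power_char_fun_diff_ge[OF c d eta C e Y small large tpos tpi])
    have e1: "(if \<bar>\<theta>'\<bar> < \<delta> then \<kappa> / \<bar>\<theta>'\<bar> else 0) = P i"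
      unfolding P_def fa(1) using fa(3) Npos by (simp add: field_simps)
    have "exp (- (c / 2 * \<bar>\<theta>'\<bar> * real (Suc h))) \<le> exp (- lam * real i)"
    proof -
      have "lam * real i = c / 2 * (2 * pi * real i / real N) * (real N / 2)"
        using Npos by (simp add: lam_def field_simps)
      also have "\<dots> \<le> c / 2 * (2 * pi * real i / real N) * real (Suc h)"
        using h c fa(3) by (intro mult_left_mono) auto
      finally show ?thesis unfolding fa(1) by simp
    qed
    moreover have "2 / (c * \<bar>\<theta>'\<bar>) = real N / (c * pi * real i)"
      unfolding fa(1) using Npos fa(3) by (simp add: field_simps)
    ultimately have e2: "2 / (c * \<bar>\<theta>'\<bar>) * exp (- (c / 2 * \<bar>\<theta>'\<bar> * real (Suc h))) \<le> T i"
      unfolding T_def using c tpos by (metis mult_left_mono less_imp_le divide_pos_pos mult_pos_pos zero_less_numeral)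
    show ?thesis using U e1 e2 unfolding fa(2) i_def by linarith
  qed
  have SP: "\<kappa> / (2 * pi) * (ln (real N) - ln (real M0)) * real N \<le> (\<Sum>j\<in>{1..N-1}. P (min j (N - j)))"
    unfolding P_def M0_def using c by (intro sum_folded_harmonic_ge[OF N d(1)]) (simp add: \<kappa>_def)
  have ST: "(\<Sum>j\<in>{1..N-1}. T (min j (N - j))) \<le> 2 * (real N / (c * pi) * (1 / (1 - exp (- lam))))"
    using sum_folded_exp_div_le[OF lam, of "real N / (c * pi)" N] c by (simp add: T_def)
  have "green ?w N h = (\<Sum>j<N. Re (\<Sum>k\<le>h. char_fun ?w (2 * pi * real j / real N) ^ k)) / real N"
    by (rule green_eq_re[OF N1])
  also have "(\<Sum>j<N. Re (\<Sum>k\<le>h. char_fun ?w (2 * pi * real j / real N) ^ k))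
      = real (Suc h) + (\<Sum>j\<in>{1..N-1}. Re (\<Sum>k\<le>h. char_fun ?w (2 * pi * real j / real N) ^ k))"
  proof -
    have "{..<N} = insert 0 {1..N-1}" using N by auto
    then show ?thesis by simp
  qed
  finally have G: "green ?w N h = (real (Suc h) + (\<Sum>j\<in>{1..N-1}. Re (\<Sum>k\<le>h. char_fun ?w (2 * pi * real j / real N) ^ k))) / real N" .
  have "(\<Sum>j\<in>{1..N-1}. P (min j (N - j)) - T (min j (N - j)) - 2 / \<eta>)
      \<le> (\<Sum>j\<in>{1..N-1}. Re (\<Sum>k\<le>h. char_fun ?w (2 * pi * real j / real N) ^ k))"
    by (intro sum_mono per)
  moreover have "(\<Sum>j\<in>{1..N-1}. P (min j (N - j)) - T (min j (N - j)) - 2 / \<eta>)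
      = (\<Sum>j\<in>{1..N-1}. P (min j (N - j))) - (\<Sum>j\<in>{1..N-1}. T (min j (N - j))) - real (N - 1) * (2 / \<eta>)"
    by (simp add: sum_subtractf)
  moreover have "real (N - 1) * (2 / \<eta>) \<le> real N * (2 / \<eta>)" using eta by (intro mult_right_mono) auto
  ultimately have L: "\<kappa> / (2 * pi) * (ln (real N) - ln (real M0)) * real N
      - 2 * (real N / (c * pi) * (1 / (1 - exp (- lam)))) - real N * (2 / \<eta>)
      \<le> (\<Sum>j\<in>{1..N-1}. Re (\<Sum>k\<le>h. char_fun ?w (2 * pi * real j / real N) ^ k))"
    using SP ST by linarith
  define X where "X = 2 / (c * pi * (1 - exp (- (c * pi / 2))))"
  have X1: "2 * (real N / (c * pi) * (1 / (1 - exp (- lam)))) = X * real N"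
    unfolding X_def lam_def by (simp add: field_simps)
  have X3: "(\<kappa> / (2 * pi) * ln (real N) - (\<kappa> / (2 * pi) * ln (real M0) + X + 2 / \<eta>)) * real N
      = \<kappa> / (2 * pi) * (ln (real N) - ln (real M0)) * real N - X * real N - real N * (2 / \<eta>)"
    by (simp add: algebra_simps diff_divide_distrib)
  have "(\<kappa> / (2 * pi) * ln (real N) - (\<kappa> / (2 * pi) * ln (real M0) + X + 2 / \<eta>)) * real N
      \<le> \<kappa> / (2 * pi) * (ln (real N) - ln (real M0)) * real N
        - 2 * (real N / (c * pi) * (1 / (1 - exp (- lam)))) - real N * (2 / \<eta>)"
    using X1 X3 by linarith
  also have "\<dots> \<le> real (Suc h) + (\<Sum>j\<in>{1..N-1}. Re (\<Sum>k\<le>h. char_fun ?w (2 * pi * real j / real N) ^ k))"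
    using L by simp
  finally show ?thesis unfolding G X_def using Npos by (simp add: pos_le_divide_eq)
qed

section \<open>The three regimes\<close>

text \<open>The consequences of (A1) and (A3) used below, with the exponent \<open>\<epsilon>\<close> of the error term
  decreased below \<open>1\<close> (see \<open>char_fun_estimates_exist\<close>).\<close>

locale char_fun_estimates =
  fixes p :: "int pmf" and c \<beta> \<epsilon> \<delta> C \<eta> :: real
  assumes c: "0 < c" and \<beta>: "0 < \<beta>" and \<epsilon>: "0 < \<epsilon>" "\<epsilon> < 1"
    and \<delta>: "0 < \<delta>" "\<delta> \<le> 1" and C: "0 < C" and \<eta>: "0 < \<eta>"
    and near_0: "\<forall>\<theta>. \<theta> \<noteq> 0 \<and> \<bar>\<theta>\<bar> < \<delta> \<longrightarrow>
           norm (char_fun p \<theta>) \<le> 1 - c * \<bar>\<theta>\<bar> powr \<beta> + C * \<bar>\<theta>\<bar> powr (\<beta> + \<epsilon>)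
         \<and> norm (char_fun p \<theta>) \<le> 1 - c / 2 * \<bar>\<theta>\<bar> powr \<beta>
         \<and> norm (1 - char_fun p \<theta>) \<le> c * \<bar>\<theta>\<bar> powr \<beta> + C * \<bar>\<theta>\<bar> powr (\<beta> + \<epsilon>)
         \<and> C * \<bar>\<theta>\<bar> powr \<epsilon> \<le> c / 2"
    and away_from_0: "\<forall>\<theta>. \<delta> \<le> \<bar>\<theta>\<bar> \<and> \<bar>\<theta>\<bar> \<le> pi \<longrightarrow> norm (char_fun p \<theta>) \<le> 1 - \<eta>"

lemma char_fun_estimates_exist:
  assumes A1: "\<forall>y::int. int_subgroup_gen {y + k | k. k \<in> set_pmf p} = UNIV"
    and A3: "(\<lambda>\<theta>. char_fun p \<theta> - (1 - of_real (c * \<bar>\<theta>\<bar> powr \<beta>)))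
               \<in> O[at 0](\<lambda>\<theta>. of_real (\<bar>\<theta>\<bar> powr (\<beta> + \<epsilon>)))"
    and "0 < c" "0 < \<beta>" "0 < \<epsilon>"
  shows "\<exists>\<delta> C \<eta>. char_fun_estimates p c \<beta> (min \<epsilon> (1 / 2)) \<delta> C \<eta>"
proof -
  obtain \<delta> C where "0 < \<delta>" "0 < C" "\<delta> \<le> 1" and near_0: "\<forall>\<theta>. \<theta> \<noteq> 0 \<and> \<bar>\<theta>\<bar> < \<delta> \<longrightarrow>
           norm (char_fun p \<theta>) \<le> 1 - c * \<bar>\<theta>\<bar> powr \<beta> + C * \<bar>\<theta>\<bar> powr (\<beta> + min \<epsilon> (1 / 2))
         \<and> norm (char_fun p \<theta>) \<le> 1 - c / 2 * \<bar>\<theta>\<bar> powr \<beta>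
         \<and> norm (1 - char_fun p \<theta>) \<le> c * \<bar>\<theta>\<bar> powr \<beta> + C * \<bar>\<theta>\<bar> powr (\<beta> + min \<epsilon> (1 / 2))
         \<and> C * \<bar>\<theta>\<bar> powr min \<epsilon> (1 / 2) \<le> c / 2"
    using char_fun_near_0_bounds[OF A3, of "min \<epsilon> (1 / 2)"] assms by auto
  moreover obtain \<eta> where "0 < \<eta>" "\<forall>\<theta>. \<delta> \<le> \<bar>\<theta>\<bar> \<and> \<bar>\<theta>\<bar> \<le> pi \<longrightarrow> norm (char_fun p \<theta>) \<le> 1 - \<eta>"
    using char_fun_bounded_away_from_1[OF A1 \<open>0 < \<delta>\<close>] by blast
  ultimately have "char_fun_estimates p c \<beta> (min \<epsilon> (1 / 2)) \<delta> C \<eta>"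
    using assms by unfold_locales auto
  then show ?thesis by blast
qed

context char_fun_estimates
begin

lemma near_0_half: "\<forall>\<theta>. \<theta> \<noteq> 0 \<and> \<bar>\<theta>\<bar> < \<delta> \<longrightarrow> norm (char_fun p \<theta>) \<le> 1 - c / 2 * \<bar>\<theta>\<bar> powr \<beta>"
  using near_0 by blast

lemma capture_prob_lower_bound_lt1:
  assumes "\<beta> < 1"
  shows "\<exists>c1>0. \<forall>N::nat. N \<ge> 2 \<longrightarrow> c1 \<le> capture_prob p q N"
proof -
  define K where "K = 4 / c * (2 * pi) powr (- \<beta>) / (1 - \<beta>) + 1 / \<eta>"
  have "0 < K" unfolding K_def using c \<eta> assms
    by (intro add_nonneg_pos divide_nonneg_nonneg mult_nonneg_nonneg) auto
  have "green (diff_pmf p q) N (N - 1) \<le> 2 + K" if N: "N \<ge> 2" for N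
  proof -
    have "green (diff_pmf p q) N (N - 1)
        \<le> 2 + 2 / real N * (\<Sum>i\<in>{1..N div 2}. 2 / c * \<bar>2 * pi * real i / real N\<bar> powr (- \<beta>) + 1 / \<eta>)"
    proof (rule green_le_avg_sum[OF N])
      fix i \<theta> assume \<theta>: "\<bar>\<theta>\<bar> = 2 * pi * real i / real N" "0 < \<bar>\<theta>\<bar>" "\<bar>\<theta>\<bar> \<le> pi"
      have "(\<Sum>k\<in>{1..N-1}. norm (char_fun p \<theta>) ^ k) \<le> 2 / c * \<bar>\<theta>\<bar> powr (- \<beta>) + 1 / \<eta>"
        by (rule sum_power_char_fun_le[OF c \<beta> \<delta>(1) \<eta> near_0_half away_from_0 \<theta>(2,3)])
      then show "(\<Sum>k\<in>{1..N-1}. norm (char_fun p \<theta>) ^ k)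
          \<le> 2 / c * \<bar>2 * pi * real i / real N\<bar> powr (- \<beta>) + 1 / \<eta>"
        using \<theta>(1) by simp
    qed (use c \<eta> in auto)
    also have "\<dots> \<le> 2 + K" using avg_sum_angle_le_lt1[OF \<beta> assms N c \<eta>] by (simp add: K_def)
    finally show ?thesis .
  qed
  then show ?thesis
    using \<open>0 < K\<close> by (intro exI[of _ "1 / (2 + K)"]) (auto intro: capture_prob_ge_inverse_bound)
qed

lemma capture_prob_lower_bound_gt1:
  assumes "1 < \<beta>"
  shows "\<exists>c4>0. \<forall>N::nat. N \<ge> 2 \<longrightarrow> c4 / real N powr ((\<beta> - 1) / \<beta>) \<le> capture_prob p q N"
proof -
  define K where "K = 4 + 2 * (2 / c * (2 * pi) powr (- \<beta>)) / (\<beta> - 1) + 1 / \<eta>"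
  have "0 < K" unfolding K_def using c \<eta> assms
    by (intro add_pos_pos add_pos_nonneg divide_nonneg_nonneg mult_nonneg_nonneg) auto
  have "green (diff_pmf p q) N (N - 1) \<le> (2 + K) * real N powr ((\<beta> - 1) / \<beta>)" if N: "N \<ge> 2" for N
  proof -
    have "green (diff_pmf p q) N (N - 1) \<le> 2 + 2 / real N * (\<Sum>i\<in>{1..N div 2}.
        min (real N) (2 / c * \<bar>2 * pi * real i / real N\<bar> powr (- \<beta>)) + 1 / \<eta>)"
    proof (rule green_le_avg_sum[OF N])
      fix i \<theta> assume \<theta>: "\<bar>\<theta>\<bar> = 2 * pi * real i / real N" "0 < \<bar>\<theta>\<bar>" "\<bar>\<theta>\<bar> \<le> pi"
      have "(\<Sum>k\<in>{1..N-1}. norm (char_fun p \<theta>) ^ k) \<le> 2 / c * \<bar>\<theta>\<bar> powr (- \<beta>) + 1 / \<eta>"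
        by (rule sum_power_char_fun_le[OF c \<beta> \<delta>(1) \<eta> near_0_half away_from_0 \<theta>(2,3)])
      moreover have "(\<Sum>k\<in>{1..N-1}. norm (char_fun p \<theta>) ^ k) \<le> real (N - 1)"
        using sum_bounded_above[of "{1..N-1}" "\<lambda>k. norm (char_fun p \<theta>) ^ k" 1]
        by (simp add: power_le_one norm_char_fun_le_1)
      then have "(\<Sum>k\<in>{1..N-1}. norm (char_fun p \<theta>) ^ k) \<le> real N + 1 / \<eta>"
        using \<eta> by (simp add: add_increasing2 of_nat_diff)
      ultimately show "(\<Sum>k\<in>{1..N-1}. norm (char_fun p \<theta>) ^ k)
          \<le> min (real N) (2 / c * \<bar>2 * pi * real i / real N\<bar> powr (- \<beta>)) + 1 / \<eta>"
        using \<theta>(1) by (simp add: min_add_distrib_left)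
    qed (use c \<eta> in auto)
    also have "\<dots> \<le> 2 + K * real N powr ((\<beta> - 1) / \<beta>)"
      using avg_sum_angle_le_gt1[OF assms N c \<eta>] by (simp add: K_def)
    also have "\<dots> \<le> (2 + K) * real N powr ((\<beta> - 1) / \<beta>)"
      using N assms by (simp add: distrib_right ge_one_powr_ge_zero)
    finally show ?thesis .
  qed
  then show ?thesis
    using \<open>0 < K\<close> by (intro exI[of _ "1 / (2 + K)"]) (auto intro: capture_prob_ge_inverse_bound)
qed

lemma capture_prob_bounds_eq1:
  assumes "\<beta> = 1" and Y: "set_pmf q \<subseteq> {-1, 0, 1}"
  shows "\<exists>c2>0. \<exists>c3>0. \<forall>N::nat. N \<ge> 2 \<longrightarrow>
           1 / (ln (real N) / (c * pi) + c2) \<le> capture_prob p q N \<and> capture_prob p q N \<le> c3 / ln (real N)"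
proof -
  define K where "K = 1 / (c * pi) + 2 * (2 * C / c\<^sup>2) * (2 * pi) powr (- (1 - \<epsilon>)) / \<epsilon> + 1 / \<eta>"
  have "0 < K" unfolding K_def using c \<eta> C \<epsilon>
    by (intro add_pos_pos add_nonneg_pos divide_nonneg_pos mult_nonneg_nonneg) auto
  have lower: "green (diff_pmf p q) N (N - 1) \<le> ln (real N) / (c * pi) + (2 + K)" if N: "N \<ge> 2" for N
  proof -
    have "green (diff_pmf p q) N (N - 1) \<le> 2 + 2 / real N * (\<Sum>i\<in>{1..N div 2}. 1 / (c * \<bar>2 * pi * real i / real N\<bar>)
        + 2 * C / c\<^sup>2 * \<bar>2 * pi * real i / real N\<bar> powr (- (1 - \<epsilon>)) + 1 / \<eta>)"
    proof (rule green_le_avg_sum[OF N])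
      fix i \<theta> assume \<theta>: "\<bar>\<theta>\<bar> = 2 * pi * real i / real N" "0 < \<bar>\<theta>\<bar>" "\<bar>\<theta>\<bar> \<le> pi"
      then show "(\<Sum>k\<in>{1..N-1}. norm (char_fun p \<theta>) ^ k) \<le> 1 / (c * \<bar>2 * pi * real i / real N\<bar>)
          + 2 * C / c\<^sup>2 * \<bar>2 * pi * real i / real N\<bar> powr (- (1 - \<epsilon>)) + 1 / \<eta>"
        using sum_power_char_fun_le_eq1[OF c \<delta>(1) \<eta> C \<epsilon>(1) _ away_from_0 \<theta>(2,3)] near_0 assms(1)
        by simp
    next
      show "0 \<le> 1 / (c * \<bar>2 * pi * real i / real N\<bar>)
          + 2 * C / c\<^sup>2 * \<bar>2 * pi * real i / real N\<bar> powr (- (1 - \<epsilon>)) + 1 / \<eta>" for i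
        using c C \<eta> by (intro add_nonneg_nonneg) auto
    qed
    also have "\<dots> \<le> ln (real N) / (c * pi) + (2 + K)"
      using avg_sum_angle_le_eq1[OF N c \<eta> C \<epsilon>] by (simp add: K_def)
    finally show ?thesis .
  qed
  define \<kappa> where "\<kappa> = c / (2 * (c + C + 1)\<^sup>2)"
  define M0 where "M0 = nat \<lceil>2 * pi / \<delta>\<rceil> + 1"
  define a where "a = \<kappa> / (2 * pi)"
  define B where "B = \<kappa> / (2 * pi) * ln (real M0) + 2 / (c * pi * (1 - exp (- (c * pi / 2)))) + 2 / \<eta>"
  have a: "0 < a" using c C unfolding a_def \<kappa>_def by (auto intro!: divide_pos_pos)
  have B: "0 < B"
  proof -
    have "0 \<le> \<kappa> / (2 * pi) * ln (real M0)" using c unfolding M0_def \<kappa>_def by auto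
    moreover have "0 < 2 / (c * pi * (1 - exp (- (c * pi / 2))))" using c by simp
    ultimately show ?thesis unfolding B_def using \<eta> by (smt (verit) divide_pos_pos)
  qed
  have upper: "capture_prob p q N \<le> (6 / a + 2 * B / a) / ln (real N)" if N: "N \<ge> 2" for N
  proof (rule le_div_if_le_inverse_affine[OF a B])
    let ?G = "green (diff_pmf p q) N (N - N div 2)"
    show "a * ln (real N) - B \<le> ?G"
      unfolding a_def B_def \<kappa>_def M0_def
      using near_0 assms(1) by (intro green_ge_log[OF c \<delta> \<eta> _ \<epsilon>(1) Y _ away_from_0 N]) (use C in auto)
    show "0 < ?G" by (rule less_le_trans[OF zero_less_one green_ge_1])
    show "capture_prob p q N \<le> 3 / ?G" by (rule capture_prob_le_inverse_green[OF N])
    show "capture_prob p q N \<le> 1" by (simp add: capture_prob_def)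
  qed (use N in simp)
  have "\<forall>N::nat. N \<ge> 2 \<longrightarrow> 1 / (ln (real N) / (c * pi) + (2 + K)) \<le> capture_prob p q N
      \<and> capture_prob p q N \<le> (6 / a + 2 * B / a) / ln (real N)"
    using lower upper by (auto intro!: capture_prob_ge_inverse_bound)
  moreover have "0 < 2 + K" "0 < 6 / a + 2 * B / a" using \<open>0 < K\<close> a B by (auto intro!: add_pos_pos)
  ultimately show ?thesis by blast
qed

end

theorem corollary1:
  fixes p q :: "int pmf" and \<beta> c_star \<epsilon> :: real
  assumes A1: "\<forall>y::int. int_subgroup_gen {y + k | k. k \<in> set_pmf p} = UNIV"
    and A2: "\<forall>k. pmf p k = pmf p (- k)"
    and A3_beta: "0 < \<beta>" "\<beta> \<le> 2"
    and A3_c: "0 < c_star"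
    and A3_eps: "0 < \<epsilon>"
    and A3: "(\<lambda>\<theta>. char_fun p \<theta> - (1 - of_real (c_star * \<bar>\<theta>\<bar> powr \<beta>)))
               \<in> O[at 0](\<lambda>\<theta>. of_real (\<bar>\<theta>\<bar> powr (\<beta> + \<epsilon>)))"
    and Y: "set_pmf q \<subseteq> {-1, 0, 1}"
  shows "(\<beta> < 1 \<longrightarrow> (\<exists>c1>0. \<forall>N::nat. N \<ge> 2 \<longrightarrow> c1 \<le> capture_prob p q N))
       \<and> (\<beta> = 1 \<longrightarrow> (\<exists>c2>0. \<exists>c3>0. \<forall>N::nat. N \<ge> 2 \<longrightarrow>
             1 / (ln (real N) / (c_star * pi) + c2) \<le> capture_prob p q N
           \<and> capture_prob p q N \<le> c3 / ln (real N)))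
       \<and> (1 < \<beta> \<longrightarrow> (\<exists>c4>0. \<forall>N::nat. N \<ge> 2 \<longrightarrow>
             c4 / real N powr ((\<beta> - 1) / \<beta>) \<le> capture_prob p q N))"
proof -
  obtain \<delta> C \<eta> where "char_fun_estimates p c_star \<beta> (min \<epsilon> (1 / 2)) \<delta> C \<eta>"
    using char_fun_estimates_exist[OF A1 A3 A3_c A3_beta(1) A3_eps] by blast
  then interpret char_fun_estimates p c_star \<beta> "min \<epsilon> (1 / 2)" \<delta> C \<eta> .
  show ?thesis
    using capture_prob_lower_bound_lt1 capture_prob_bounds_eq1[OF _ Y] capture_prob_lower_bound_gt1
    by blast
qed

end
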